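(* Let $\mathbf{C}$ be a category of $\mathbf{FI}$ type. If $M_\bullet$ is a free $\mathbf{C}$-module over $\mathbb{C}$, then there exists a character polynomial $P$ on $\mathbf{C}$ whose restriction to $G_c$ coincides with the character of the $G_c$-representation $M_c$ for every object $c$. Conversely, the character polynomials arising in this way span the space of all character polynomials on $\mathbf{C}$. More precisely, for every object $d$, the character polynomials of degree $\leq d$ are exactly the characters of virtual free $\mathbf{C}$-modules of degree $\leq d$.
   Context: A category $\mathbf{C}$ is of $\mathbf{FI}$ type if: (1) all Hom-sets are finite; (2) every morphism is a monomorphism and every endomorphism is an isomorphism; (3) for all objects $c,d$ the group $G_d=\mathrm{Aut}_{\mathbf{C}}(d)$ acts transitively (by postcomposition) on $\mathrm{Hom}_{\mathbf{C}}(c,d)$; (4) for every object $d$ there are only finitely many isomorphism classes of objects $c$ with $\mathrm{Hom}_{\mathbf{C}}(c,d)\neq\emptyset$; (5) every pair of morphisms $c_1\to d\leftarrow c_2$ has a pullback, and every pair of morphisms $f_i:p\to c_i$ ($i=1,2$) has a weak push-out. A weak push-out of $f_1,f_2$ is a commutative square given by $g_i:c_i\to d$ with $g_1f_1=g_2f_2$ which is a pullback square, such that for every other pullback square $h_i:c_i\to z$ with $h_1f_1=h_2f_2$ there is a unique $h:d\to z$ with $hg_i=h_i$. Write $c\leq d$ if $\mathrm{Hom}_{\mathbf{C}}(c,d)\neq\emptyset$, and $G_c=\mathrm{Aut}_{\mathbf{C}}(c)$. A $\mathbf{C}$-module is a functor from $\mathbf{C}$ to complex vector spaces; $M_c$ is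 a $G_c$-representation. For an object $c$ and a finite-dimensional $G_c$-representation $V$, $\mathrm{Ind}_c(V)$ is the $\mathbf{C}$-module $d\mapsto \mathbb{C}[\mathrm{Hom}_{\mathbf{C}}(c,d)]\otimes_{\mathbb{C}[G_c]}V$ (with $G_c$ acting on the right by precomposition, and morphisms acting by postcomposition). A free $\mathbf{C}$-module is a finite direct sum of such induction modules; it has degree $\leq d$ if every $\mathrm{Ind}_c(V)$ appearing nontrivially has $c\leq d$. A virtual free $\mathbf{C}$-module is a formal $\mathbb{C}$-linear combination of induction modules (with $\mathrm{Ind}_c$ extended linearly to virtual representations), with degree defined in the same way. The character of a $\mathbf{C}$-module assigns to each $G_c$ the character of $M_c$. Binomial set: $\binom{d}{c}=\mathrm{Hom}_{\mathbf{C}}(c,d)/G_c$, with classes $[f]$. For a conjugacy class $\mu\subseteq G_c$ (write $|\mu|=c$), the class function $\binom{X}{\mu}$ is defined on every $G_d$ by $\binom{X}{\mu}(\sigma)=\#\{[f]\in\binom{d}{c} : \exists\psi\in\mu,\ \sigma\circ f=f\circ\psi\}$, of degree $|\mu|$. A character polynomial is a $\mathbb{C}$-linear combination of such functions; it has degree $\leq d$ if every $\binom{X}{\mu}$ appearing nontrivially has $|\mu|\leq d$. *)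

theory Defs
  imports Complex_Main "HOL-Library.Function_Algebras"
begin

text \<open>A category is given by a set of objects, Hom-sets, composition
  (cmp g f means g after f) and identities.\<close>

record ('o, 'm) cat =
  Obj :: "'o set"
  Hom :: "'o \<Rightarrow> 'o \<Rightarrow> 'm set"
  cmp :: "'m \<Rightarrow> 'm \<Rightarrow> 'm"
  idm :: "'o \<Rightarrow> 'm"

definition is_category :: "('o, 'm) cat \<Rightarrow> bool" where
  "is_category C \<longleftrightarrow>
     (\<forall>a b. Hom C a b \<noteq> {} \<longrightarrow> a \<in> Obj C \<and> b \<in> Obj C) \<and>
     (\<forall>a b a' b' f. f \<in> Hom C a b \<and> f \<in> Hom C a' b' \<longrightarrow> a = a' \<and> b = b') \<and>
     (\<forall>a\<in>Obj C. idm C a \<in> Hom C a a) \<and>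
     (\<forall>a b c f g. f \<in> Hom C a b \<longrightarrow> g \<in> Hom C b c \<longrightarrow> cmp C g f \<in> Hom C a c) \<and>
     (\<forall>a b c d f g h. f \<in> Hom C a b \<longrightarrow> g \<in> Hom C b c \<longrightarrow> h \<in> Hom C c d \<longrightarrow>
        cmp C h (cmp C g f) = cmp C (cmp C h g) f) \<and>
     (\<forall>a b f. f \<in> Hom C a b \<longrightarrow> cmp C (idm C b) f = f \<and> cmp C f (idm C a) = f)"

definition Aut :: "('o, 'm) cat \<Rightarrow> 'o \<Rightarrow> 'm set" where
  "Aut C c = {f \<in> Hom C c c. \<exists>g\<in>Hom C c c. cmp C g f = idm C c \<and> cmp C f g = idm C c}"

definition isomorphic :: "('o, 'm) cat \<Rightarrow> 'o \<Rightarrow> 'o \<Rightarrow> bool" where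
  "isomorphic C c c' \<longleftrightarrow>
     (\<exists>f\<in>Hom C c c'. \<exists>g\<in>Hom C c' c. cmp C g f = idm C c \<and> cmp C f g = idm C c')"

definition iso_class :: "('o, 'm) cat \<Rightarrow> 'o \<Rightarrow> 'o set" where
  "iso_class C c = {c' \<in> Obj C. isomorphic C c c'}"

definition obj_le :: "('o, 'm) cat \<Rightarrow> 'o \<Rightarrow> 'o \<Rightarrow> bool" where
  "obj_le C c d \<longleftrightarrow> Hom C c d \<noteq> {}"

definition is_pullback ::
  "('o, 'm) cat \<Rightarrow> 'o \<Rightarrow> 'o \<Rightarrow> 'o \<Rightarrow> 'o \<Rightarrow> 'm \<Rightarrow> 'm \<Rightarrow> 'm \<Rightarrow> 'm \<Rightarrow> bool" where
  "is_pullback C p c1 c2 d f1 f2 g1 g2 \<longleftrightarrow>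
     f1 \<in> Hom C p c1 \<and> f2 \<in> Hom C p c2 \<and> g1 \<in> Hom C c1 d \<and> g2 \<in> Hom C c2 d \<and>
     cmp C g1 f1 = cmp C g2 f2 \<and>
     (\<forall>z h1 h2. h1 \<in> Hom C z c1 \<longrightarrow> h2 \<in> Hom C z c2 \<longrightarrow> cmp C g1 h1 = cmp C g2 h2 \<longrightarrow>
        (\<exists>!h. h \<in> Hom C z p \<and> cmp C f1 h = h1 \<and> cmp C f2 h = h2))"

definition FI_type :: "('o, 'm) cat \<Rightarrow> bool" where
  "FI_type C \<longleftrightarrow> is_category C \<and>
     \<comment> \<open>(1) finite Hom-sets\<close>
     (\<forall>a b. finite (Hom C a b)) \<and>
     \<comment> \<open>(2) monomorphisms; endomorphisms are isomorphisms\<close>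
     (\<forall>a b e f g h. f \<in> Hom C a b \<longrightarrow> g \<in> Hom C e a \<longrightarrow> h \<in> Hom C e a \<longrightarrow>
         cmp C f g = cmp C f h \<longrightarrow> g = h) \<and>
     (\<forall>c f. f \<in> Hom C c c \<longrightarrow> f \<in> Aut C c) \<and>
     \<comment> \<open>(3) transitivity of the postcomposition action\<close>
     (\<forall>c d f f'. f \<in> Hom C c d \<longrightarrow> f' \<in> Hom C c d \<longrightarrow> (\<exists>\<sigma>\<in>Aut C d. cmp C \<sigma> f = f')) \<and>
     \<comment> \<open>(4) finitely many iso classes below each object\<close>
     (\<forall>d\<in>Obj C. finite (iso_class C ` {c \<in> Obj C. Hom C c d \<noteq> {}})) \<and>
     \<comment> \<open>(5a) pullbacks\<close>
     (\<forall>c1 c2 d g1 g2. g1 \<in> Hom C c1 d \<longrightarrow> g2 \<in> Hom C c2 d \<longrightarrow>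
         (\<exists>p f1 f2. is_pullback C p c1 c2 d f1 f2 g1 g2)) \<and>
     \<comment> \<open>(5b) weak push-outs\<close>
     (\<forall>p c1 c2 f1 f2. f1 \<in> Hom C p c1 \<longrightarrow> f2 \<in> Hom C p c2 \<longrightarrow>
         (\<exists>d g1 g2. is_pullback C p c1 c2 d f1 f2 g1 g2 \<and>
            (\<forall>z h1 h2. is_pullback C p c1 c2 z f1 f2 h1 h2 \<longrightarrow>
               (\<exists>!h. h \<in> Hom C d z \<and> cmp C h g1 = h1 \<and> cmp C h g2 = h2))))"

definition conj_class :: "('o, 'm) cat \<Rightarrow> 'o \<Rightarrow> 'm set \<Rightarrow> bool" where
  "conj_class C c \<mu> \<longleftrightarrow>
     (\<exists>\<sigma>\<in>Aut C c. \<mu> = {\<psi> \<in> Aut C c. \<exists>\<tau>\<in>Aut C c. cmp C \<psi> \<tau> = cmp C \<tau> \<sigma>})"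

definition orbit_cls :: "('o, 'm) cat \<Rightarrow> 'o \<Rightarrow> 'm \<Rightarrow> 'm set" where
  "orbit_cls C c f = {cmp C f g | g. g \<in> Aut C c}"

definition binomX :: "('o, 'm) cat \<Rightarrow> 'o \<Rightarrow> 'm set \<Rightarrow> 'o \<Rightarrow> 'm \<Rightarrow> nat" where
  "binomX C c \<mu> d \<sigma> =
     card {orbit_cls C c f | f. f \<in> Hom C c d \<and> (\<exists>\<psi>\<in>\<mu>. cmp C \<sigma> f = cmp C f \<psi>)}"

text \<open>A character polynomial is a formal finite linear combination
  \<open>\<Sum> a_i binom X \<mu>_i\<close>, given as a list of triples (coefficient, object c, class in G_c).\<close>
type_synonym ('o, 'm) charpoly = "(complex \<times> 'o \<times> 'm set) list"

definition char_poly :: "('o, 'm) cat \<Rightarrow> ('o, 'm) charpoly \<Rightarrow> bool" where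
  "char_poly C P \<longleftrightarrow> (\<forall>(a, c, \<mu>) \<in> set P. c \<in> Obj C \<and> conj_class C c \<mu>)"

definition cp_deg_le :: "('o, 'm) cat \<Rightarrow> ('o, 'm) charpoly \<Rightarrow> 'o \<Rightarrow> bool" where
  "cp_deg_le C P d \<longleftrightarrow> (\<forall>(a, c, \<mu>) \<in> set P. obj_le C c d)"

text \<open>The class function defined by a character polynomial (on all groups \<open>G_e\<close>;
  set to 0 outside).\<close>
definition cp_fun :: "('o, 'm) cat \<Rightarrow> ('o, 'm) charpoly \<Rightarrow> 'o \<Rightarrow> 'm \<Rightarrow> complex" where
  "cp_fun C P e \<sigma> =
     (if e \<in> Obj C \<and> \<sigma> \<in> Aut C e
      then (\<Sum>(a, c, \<mu>) \<leftarrow> P. a * of_nat (binomX C c \<mu> e \<sigma>)) else 0)"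

definition cscale :: "complex \<Rightarrow> ('x \<Rightarrow> complex) \<Rightarrow> ('x \<Rightarrow> complex)" where
  "cscale a u = (\<lambda>x. a * u x)"

definition delta :: "'x \<Rightarrow> 'x \<Rightarrow> complex" where
  "delta x = (\<lambda>y. if y = x then 1 else 0)"

text \<open>Trace of the map induced by a linear endomorphism \<open>T\<close> of \<open>U\<close>
  (with \<open>T K \<subseteq> K\<close>) on the quotient \<open>U/K\<close>: choose a basis \<open>C\<close> of \<open>K\<close>
  and extend by \<open>B\<close> to a basis of \<open>U\<close>; the classes of \<open>B\<close> form a basis of \<open>U/K\<close>,
  and the trace is the sum of the diagonal coefficients.\<close>
definition quot_trace ::
  "('x \<Rightarrow> complex) set \<Rightarrow> ('x \<Rightarrow> complex) set \<Rightarrow> (('x \<Rightarrow> complex) \<Rightarrow> ('x \<Rightarrow> complex)) \<Rightarrow> complex" where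
  "quot_trace U K T =
     (let (B, Cb) = (SOME (B, Cb). Cb \<subseteq> K \<and> \<not> module.dependent cscale Cb \<and> module.span cscale Cb = K \<and>
                                B \<subseteq> U \<and> B \<inter> Cb = {} \<and> \<not> module.dependent cscale (B \<union> Cb) \<and>
                                module.span cscale (B \<union> Cb) = U)
      in \<Sum>b\<in>B. module.representation cscale (B \<union> Cb) (T b) b)"

text \<open>A finite-dimensional representation of \<open>G_c\<close>, realised on \<open>\<complex>^n\<close>
  by matrices \<open>\<rho> g\<close> (entries \<open>\<rho> g i j\<close>, \<open>i, j < n\<close>).\<close>
definition is_rep :: "('o, 'm) cat \<Rightarrow> 'o \<Rightarrow> nat \<Rightarrow> ('m \<Rightarrow> nat \<Rightarrow> nat \<Rightarrow> complex) \<Rightarrow> bool" where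
  "is_rep C c n \<rho> \<longleftrightarrow>
     (\<forall>i<n. \<forall>j<n. \<rho> (idm C c) i j = (if i = j then 1 else 0)) \<and>
     (\<forall>g\<in>Aut C c. \<forall>h\<in>Aut C c. \<forall>i<n. \<forall>j<n.
        \<rho> (cmp C g h) i j = (\<Sum>k<n. \<rho> g i k * \<rho> h k j))"

text \<open>A free module is a finite direct sum \<open>\<Oplus>_i Ind_{c_i}(V_i)\<close>, given by the list of
  triples \<open>(c_i, n_i, \<rho>_i)\<close>.\<close>
type_synonym ('o, 'm) freemod = "('o \<times> nat \<times> ('m \<Rightarrow> nat \<Rightarrow> nat \<Rightarrow> complex)) list"

definition free_module :: "('o, 'm) cat \<Rightarrow> ('o, 'm) freemod \<Rightarrow> bool" where
  "free_module C L \<longleftrightarrow> (\<forall>(c, n, \<rho>) \<in> set L. c \<in> Obj C \<and> is_rep C c n \<rho>)"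

text \<open>Coordinates of \<open>\<Oplus>_i \<complex>[Hom(c_i,e)] \<otimes>_\<complex> V_i\<close>: triples \<open>(i, f, k)\<close>
  standing for \<open>f \<otimes> e_k\<close> in the \<open>i\<close>-th summand.\<close>
definition fm_coords :: "('o, 'm) cat \<Rightarrow> ('o, 'm) freemod \<Rightarrow> 'o \<Rightarrow> (nat \<times> 'm \<times> nat) set" where
  "fm_coords C L e =
     {(i, f, k). i < length L \<and> f \<in> Hom C (fst (L ! i)) e \<and> k < fst (snd (L ! i))}"

definition fm_space :: "('o, 'm) cat \<Rightarrow> ('o, 'm) freemod \<Rightarrow> 'o \<Rightarrow> (nat \<times> 'm \<times> nat \<Rightarrow> complex) set" where
  "fm_space C L e = {u. \<forall>x. u x \<noteq> 0 \<longrightarrow> x \<in> fm_coords C L e}"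

text \<open>Relations \<open>(f g) \<otimes> v - f \<otimes> (g v)\<close> defining the tensor product over \<open>\<complex>[G_c]\<close>.\<close>
definition fm_relations :: "('o, 'm) cat \<Rightarrow> ('o, 'm) freemod \<Rightarrow> 'o \<Rightarrow> (nat \<times> 'm \<times> nat \<Rightarrow> complex) set" where
  "fm_relations C L e =
     module.span cscale
       {delta (i, cmp C f g, k) - (\<Sum>j < fst (snd (L ! i)). cscale (snd (snd (L ! i)) g j k) (delta (i, f, j)))
        | i f g k. i < length L \<and> f \<in> Hom C (fst (L ! i)) e \<and> g \<in> Aut C (fst (L ! i)) \<and>
                   k < fst (snd (L ! i))}"

definition fm_act :: "('o, 'm) cat \<Rightarrow> ('o, 'm) freemod \<Rightarrow> 'o \<Rightarrow> 'm \<Rightarrow>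
    (nat \<times> 'm \<times> nat \<Rightarrow> complex) \<Rightarrow> (nat \<times> 'm \<times> nat \<Rightarrow> complex)" where
  "fm_act C L e \<sigma> u = (\<Sum>(i, f, k) \<in> fm_coords C L e. cscale (u (i, f, k)) (delta (i, cmp C \<sigma> f, k)))"

text \<open>Character of the free module at \<open>\<sigma> \<in> G_e\<close> (0 outside).\<close>
definition chi_free :: "('o, 'm) cat \<Rightarrow> ('o, 'm) freemod \<Rightarrow> 'o \<Rightarrow> 'm \<Rightarrow> complex" where
  "chi_free C L e \<sigma> =
     (if e \<in> Obj C \<and> \<sigma> \<in> Aut C e
      then quot_trace (fm_space C L e) (fm_relations C L e) (fm_act C L e \<sigma>) else 0)"

text \<open>A virtual free module: formal complex linear combination \<open>\<Sum> a_j Ind_{c_j}(V_j)\<close>.\<close>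
type_synonym ('o, 'm) virtmod = "(complex \<times> 'o \<times> nat \<times> ('m \<Rightarrow> nat \<Rightarrow> nat \<Rightarrow> complex)) list"

definition virtual_free :: "('o, 'm) cat \<Rightarrow> ('o, 'm) virtmod \<Rightarrow> bool" where
  "virtual_free C V \<longleftrightarrow> (\<forall>(a, c, n, \<rho>) \<in> set V. c \<in> Obj C \<and> is_rep C c n \<rho>)"

definition vf_deg_le :: "('o, 'm) cat \<Rightarrow> ('o, 'm) virtmod \<Rightarrow> 'o \<Rightarrow> bool" where
  "vf_deg_le C V d \<longleftrightarrow> (\<forall>(a, c, n, \<rho>) \<in> set V. obj_le C c d)"

definition chi_virtual :: "('o, 'm) cat \<Rightarrow> ('o, 'm) virtmod \<Rightarrow> 'o \<Rightarrow> 'm \<Rightarrow> complex" where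
  "chi_virtual C V e \<sigma> = (\<Sum>(a, c, n, \<rho>) \<leftarrow> V. a * chi_free C [(c, n, \<rho>)] e \<sigma>)"

end

theory Submission
  imports Defs "HOL-Algebra.Multiplicative_Group"
begin

text \<open>Fix \<open>\<sigma> \<in> G\<^sub>e\<close> and representatives \<open>r\<close> of \<open>Hom(c,e)/G\<^sub>c\<close>. The vectors \<open>r \<otimes> v\<^sub>k\<close> form a
  basis of \<open>Ind\<^sub>c(V)\<^sub>e\<close>, and \<open>\<sigma>\<close> sends \<open>r \<otimes> v\<close> to \<open>r' \<otimes> g v\<close> where \<open>\<sigma> r = r' g\<close>. Only the
  representatives with \<open>r' = r\<close> contribute to the trace, each with \<open>\<chi>\<^sub>V(g)\<close>; grouping them
  by the conjugacy class \<open>\<mu>\<close> of \<open>g\<close> counts exactly the classes \<open>[f]\<close> in \<open>binom X \<mu> (\<sigma>)\<close>,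
  so the character of \<open>Ind\<^sub>c(V)\<close> is \<open>\<Sum>\<^sub>\<mu> \<chi>\<^sub>V(\<mu>) binom X \<mu>\<close>.
  Conversely, the indicator of a conjugacy class of a finite group is a linear combination
  of characters of representations induced from the cyclic subgroup generated by a class
  element (orthogonality of the characters of the cyclic group), and by the formula above
  the corresponding combination of induction modules has character \<open>binom X \<mu>\<close>.
  Both constructions preserve the object \<open>c\<close>, hence the degree.\<close>

section \<open>Traces on quotients of function spaces\<close>

interpretation cvs: vector_space cscale
  by unfold_locales (auto simp: cscale_def fun_eq_iff algebra_simps)

lemma cscale_apply [simp]: "cscale a u x = a * u x"
  by (simp add: cscale_def)

lemma sum_fun_apply: "sum f A x = (\<Sum>a\<in>A. (f a :: 'x \<Rightarrow> 'b::comm_monoid_add) x)"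
  by (induct A rule: infinite_finite_induct) auto

lemma additive_sum:
  assumes "\<And>u v. f (u + v) = f u + f v" "f 0 = 0"
  shows "f (sum g S) = (\<Sum>a\<in>S. f (g a))"
  using sum_comp_morphism[of f g S] assms by (simp add: comp_def)

text \<open>If \<open>u \<equiv> \<Sum>\<^sub>r \<psi> r u \<cdot> vec r\<close> modulo \<open>K\<close> for all \<open>u \<in> U\<close> and the \<open>\<psi> r\<close> vanish on \<open>K\<close>, the
  identity of \<open>U/K\<close> factors through \<open>\<complex>\<^sup>I\<close>, and cyclicity of the trace gives the formula
  below; no duality between \<open>\<psi>\<close> and \<open>vec\<close> is needed.\<close>
lemma quot_trace_adapted_basis:
  fixes U K :: "('x \<Rightarrow> complex) set"
  assumes subU: "cvs.subspace U" and subK: "cvs.subspace K" and KU: "K \<subseteq> U"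
  obtains B Cb where "Cb \<subseteq> K" "cvs.span Cb = K" "B \<subseteq> U" "B \<inter> Cb = {}"
    "cvs.independent (B \<union> Cb)" "cvs.span (B \<union> Cb) = U"
    "quot_trace U K T = (\<Sum>b\<in>B. cvs.representation (B \<union> Cb) (T b) b)"
proof -
  define good where "good = (\<lambda>(B, Cb). Cb \<subseteq> K \<and> \<not> cvs.dependent Cb \<and> cvs.span Cb = K \<and>
      B \<subseteq> U \<and> B \<inter> Cb = {} \<and> \<not> cvs.dependent (B \<union> Cb) \<and> cvs.span (B \<union> Cb) = U)"
  have "\<exists>x. good x"
  proof -
    obtain Cb where Cb: "Cb \<subseteq> K" "cvs.independent Cb" "K \<subseteq> cvs.span Cb"
      by (rule cvs.maximal_independent_subset)
    have spC: "cvs.span Cb = K" using Cb subK cvs.span_minimal by blast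
    obtain B' where B': "Cb \<subseteq> B'" "B' \<subseteq> U" "cvs.independent B'" "U \<subseteq> cvs.span B'"
      using cvs.maximal_independent_subset_extend[of Cb U] Cb KU by blast
    have "cvs.span B' = U" using B' subU cvs.span_minimal by blast
    moreover have "(B' - Cb) \<union> Cb = B'" using B' by blast
    ultimately have "good (B' - Cb, Cb)" using Cb spC B' unfolding good_def by auto
    then show ?thesis by blast
  qed
  moreover obtain B Cb where BC: "(B, Cb) = (SOME x. good x)" by (metis surj_pair)
  ultimately have "good (B, Cb)" using someI_ex by metis
  moreover have "quot_trace U K T = (\<Sum>b\<in>B. cvs.representation (B \<union> Cb) (T b) b)"
    unfolding quot_trace_def good_def[symmetric] BC[symmetric] by simp
  ultimately show ?thesis using that unfolding good_def by auto
qed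

lemma quot_trace_eq:
  fixes U K :: "('x \<Rightarrow> complex) set" and T :: "('x \<Rightarrow> complex) \<Rightarrow> ('x \<Rightarrow> complex)"
    and \<psi> :: "'r \<Rightarrow> ('x \<Rightarrow> complex) \<Rightarrow> complex" and vec :: "'r \<Rightarrow> ('x \<Rightarrow> complex)"
  assumes subU: "cvs.subspace U" and subK: "cvs.subspace K" and KU: "K \<subseteq> U"
    and D: "finite D" "U \<subseteq> cvs.span D"
    and TU: "\<And>u. u \<in> U \<Longrightarrow> T u \<in> U" and TK: "\<And>k. k \<in> K \<Longrightarrow> T k \<in> K"
    and Tadd: "\<And>u v. T (u + v) = T u + T v" and Tscale: "\<And>a u. T (cscale a u) = cscale a (T u)"
    and I: "finite I" and vecU: "\<And>r. r \<in> I \<Longrightarrow> vec r \<in> U"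
    and \<psi>add: "\<And>r u v. \<psi> r (u + v) = \<psi> r u + \<psi> r v"
    and \<psi>scale: "\<And>r a u. \<psi> r (cscale a u) = a * \<psi> r u"
    and \<psi>K: "\<And>r k. r \<in> I \<Longrightarrow> k \<in> K \<Longrightarrow> \<psi> r k = 0"
    and decomp: "\<And>u. u \<in> U \<Longrightarrow> u - (\<Sum>r\<in>I. cscale (\<psi> r u) (vec r)) \<in> K"
  shows "quot_trace U K T = (\<Sum>r\<in>I. \<psi> r (T (vec r)))"
proof -
  obtain B Cb where CbK: "Cb \<subseteq> K" and spC: "cvs.span Cb = K" and BU: "B \<subseteq> U"
    and disj: "B \<inter> Cb = {}" and ind': "cvs.independent (B \<union> Cb)" and spB': "cvs.span (B \<union> Cb) = U"
    and qt: "quot_trace U K T = (\<Sum>b\<in>B. cvs.representation (B \<union> Cb) (T b) b)"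
    using quot_trace_adapted_basis[OF subU subK KU] by blast
  define BB where "BB = B \<union> Cb"
  have ind: "cvs.independent BB" and spB: "cvs.span BB = U" using ind' spB' unfolding BB_def .
  have finBB: "finite BB"
    using cvs.independent_span_bound[OF D(1) ind] spB D(2) cvs.span_superset by blast
  hence finB: "finite B" and finC: "finite Cb" unfolding BB_def by auto
  define \<phi> where "\<phi> b v = cvs.representation BB v b" for b v
  have \<phi>add: "\<phi> b (u + v) = \<phi> b u + \<phi> b v" if "u \<in> U" "v \<in> U" for b u v
    using cvs.representation_add[OF ind, of v u] that spB unfolding \<phi>_def by auto
  have \<phi>scale: "\<phi> b (cscale a u) = a * \<phi> b u" if "u \<in> U" for a b u
    using cvs.representation_scale[OF ind, of u a] that spB unfolding \<phi>_def by auto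
  have \<phi>K: "\<phi> b k = 0" if "k \<in> K" "b \<in> B" for b k
  proof -
    have "cvs.representation BB k = cvs.representation Cb k"
      using cvs.representation_extend[OF ind, of k Cb] that spC unfolding BB_def by auto
    then show ?thesis
      using cvs.representation_ne_zero[of Cb k b] that disj unfolding \<phi>_def by auto
  qed
  have expand: "v = (\<Sum>x\<in>BB. cscale (\<phi> x v) x)" if "v \<in> U" for v
    using cvs.sum_representation_eq[OF ind, of v BB] that spB finBB unfolding \<phi>_def by auto
  have \<phi>sum: "\<phi> b (\<Sum>r\<in>J. f r) = (\<Sum>r\<in>J. \<phi> b (f r))"
    if "\<And>r. r \<in> J \<Longrightarrow> f r \<in> U" for b and J :: "'r set" and f
    using that
  proof (induct J rule: infinite_finite_induct)
    case (insert x F)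
    have "sum f F \<in> U" using insert subU by (intro cvs.subspace_sum) auto
    moreover have "\<phi> b (sum f F) = (\<Sum>r\<in>F. \<phi> b (f r))" using insert by auto
    moreover have "f x \<in> U" using insert by auto
    ultimately show ?case
      using \<phi>add[of "f x" "sum f F" b] by (simp only: sum.insert[OF insert(1,2)])
  qed (simp_all add: \<phi>_def cvs.representation_zero)
  have T0: "T 0 = 0" using Tscale[of 0 0] by (simp add: cscale_def zero_fun_def)
  have \<psi>0: "\<psi> r 0 = 0" for r using \<psi>scale[of r 0 0] by (simp add: cscale_def zero_fun_def)
  have Tsum: "T (\<Sum>r\<in>J. f r) = (\<Sum>r\<in>J. T (f r))" for J f
    by (rule additive_sum[where f = T]) (auto simp: Tadd T0)
  have \<psi>sum: "\<psi> r (\<Sum>j\<in>J. f j) = (\<Sum>j\<in>J. \<psi> r (f j))" for r J f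
    by (rule additive_sum[where f = "\<psi> r"]) (auto simp: \<psi>add \<psi>0)
  have diag_B: "\<phi> b (T b) = (\<Sum>r\<in>I. \<psi> r b * \<phi> b (T (vec r)))" if b: "b \<in> B" for b
  proof -
    have bU: "b \<in> U" using b BU by auto
    define kb where "kb = b - (\<Sum>r\<in>I. cscale (\<psi> r b) (vec r))"
    have kbK: "kb \<in> K" using decomp[OF bU] kb_def by simp
    have TvU: "(\<Sum>r\<in>I. cscale (\<psi> r b) (T (vec r))) \<in> U"
      using vecU TU subU by (intro cvs.subspace_sum cvs.subspace_scale) auto
    have "T b = T (\<Sum>r\<in>I. cscale (\<psi> r b) (vec r)) + T kb"
      unfolding kb_def Tadd[symmetric] by simp
    also have "T (\<Sum>r\<in>I. cscale (\<psi> r b) (vec r)) = (\<Sum>r\<in>I. cscale (\<psi> r b) (T (vec r)))"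
      unfolding Tsum by (intro sum.cong refl Tscale)
    finally have Tb: "T b = (\<Sum>r\<in>I. cscale (\<psi> r b) (T (vec r))) + T kb" .
    have "\<phi> b (T b) = \<phi> b (\<Sum>r\<in>I. cscale (\<psi> r b) (T (vec r))) + \<phi> b (T kb)"
      unfolding Tb using TvU TK[OF kbK] KU by (intro \<phi>add) auto
    also have "\<phi> b (T kb) = 0" using \<phi>K TK kbK b by auto
    also have "\<phi> b (\<Sum>r\<in>I. cscale (\<psi> r b) (T (vec r))) = (\<Sum>r\<in>I. \<psi> r b * \<phi> b (T (vec r)))"
      using vecU TU subU by (subst \<phi>sum) (auto intro!: sum.cong \<phi>scale cvs.subspace_scale)
    finally show ?thesis by simp
  qed
  have diag_I: "\<psi> r (T (vec r)) = (\<Sum>b\<in>B. \<phi> b (T (vec r)) * \<psi> r b)" if r: "r \<in> I" for r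
  proof -
    have "\<psi> r (T (vec r)) = \<psi> r (\<Sum>x\<in>BB. cscale (\<phi> x (T (vec r))) x)"
      using expand TU vecU r by metis
    also have "\<dots> = (\<Sum>x\<in>BB. \<phi> x (T (vec r)) * \<psi> r x)" by (simp add: \<psi>sum \<psi>scale)
    also have "\<dots> = (\<Sum>x\<in>B. \<phi> x (T (vec r)) * \<psi> r x) + (\<Sum>x\<in>Cb. \<phi> x (T (vec r)) * \<psi> r x)"
      unfolding BB_def using finB finC disj by (rule sum.union_disjoint)
    also have "(\<Sum>x\<in>Cb. \<phi> x (T (vec r)) * \<psi> r x) = 0"
      using \<psi>K[OF r] CbK by (intro sum.neutral) auto
    finally show ?thesis by simp
  qed
  have "quot_trace U K T = (\<Sum>b\<in>B. \<Sum>r\<in>I. \<psi> r b * \<phi> b (T (vec r)))"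
    using qt diag_B unfolding \<phi>_def BB_def by simp
  also have "\<dots> = (\<Sum>r\<in>I. \<Sum>b\<in>B. \<phi> b (T (vec r)) * \<psi> r b)"
    by (subst sum.swap) (simp add: mult.commute)
  finally show ?thesis using diag_I by simp
qed

section \<open>Class indicators of a finite group as virtual characters\<close>

definition rep_char :: "nat \<Rightarrow> ('g \<Rightarrow> nat \<Rightarrow> nat \<Rightarrow> complex) \<Rightarrow> 'g \<Rightarrow> complex" where
  "rep_char n \<rho> g = (\<Sum>k<n. \<rho> g k k)"

lemma cis_root_power_inj:
  fixes m i j :: nat
  assumes "m > 0" "i < m" "j < m" "cis (2 * pi / m) ^ i = cis (2 * pi / m) ^ j"
  shows "i = j"
proof -
  have "cis (2 * pi * real i / real m) = cis (2 * pi * real j / real m)"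
    using assms(4) by (simp add: DeMoivre mult.commute)
  then show ?thesis
    using bij_betw_roots_unity[OF assms(1)] assms(2,3) unfolding bij_betw_def inj_on_def by blast
qed

text \<open>Let \<open>H = \<langle>s\<rangle>\<close> with faithful character \<open>\<lambda>\<close>. The representations \<open>ind_rep t\<close> are the
  representations of \<open>G\<close> induced from \<open>\<lambda>\<^sup>t\<close>, written in the basis given by a transversal
  \<open>tv 0, \<dots>, tv (N - 1)\<close> of the left cosets of \<open>H\<close>.\<close>
locale cyclic_induction = group G for G (structure) +
  fixes s
  assumes finite_carrier: "finite (carrier G)" and s_closed: "s \<in> carrier G"
begin

lemma mult_inv_cancel_left: "x \<in> carrier G \<Longrightarrow> y \<in> carrier G \<Longrightarrow> x \<otimes> (inv x \<otimes> y) = y"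
  by (simp add: m_assoc[symmetric])

lemma inv_mult_cancel_left: "x \<in> carrier G \<Longrightarrow> y \<in> carrier G \<Longrightarrow> inv x \<otimes> (x \<otimes> y) = y"
  by (simp add: m_assoc[symmetric])

lemma ord_s_pos: "ord s > 0"
  using ord_ge_1[OF finite_carrier s_closed] by simp

lemma pow_mod_ord: "s [^] j = s [^] (j mod ord s)"
proof -
  have "s [^] j = (s [^] ord s) [^] (j div ord s) \<otimes> s [^] (j mod ord s)"
    by (simp only: nat_pow_pow[OF s_closed] nat_pow_mult[OF s_closed] mult_div_mod_eq)
  then show ?thesis using s_closed by simp
qed

lemma pow_s_inj: "i < ord s \<Longrightarrow> j < ord s \<Longrightarrow> s [^] i = s [^] j \<Longrightarrow> i = j"
  using ord_inj[OF s_closed] ord_s_pos unfolding inj_on_def by fastforce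

definition cyc :: "'a set" where
  "cyc = (\<lambda>j. s [^] j) ` {..<ord s}"

lemma pow_in_cyc: "s [^] (j::nat) \<in> cyc"
  unfolding cyc_def using pow_mod_ord[of j] ord_s_pos by (intro image_eqI[of _ _ "j mod ord s"]) auto

lemma cyc_closed: "y \<in> cyc \<Longrightarrow> y \<in> carrier G"
  unfolding cyc_def using s_closed by auto

lemma one_in_cyc: "\<one> \<in> cyc"
  using pow_in_cyc[of 0] by simp

lemma s_in_cyc: "s \<in> cyc"
  using pow_in_cyc[of 1] s_closed by simp

lemma cyc_mult: "y \<in> cyc \<Longrightarrow> z \<in> cyc \<Longrightarrow> y \<otimes> z \<in> cyc"
  unfolding cyc_def using s_closed by (auto simp: nat_pow_mult pow_in_cyc[unfolded cyc_def])

lemma cyc_inv: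
  assumes y: "y \<in> cyc"
  shows "inv y \<in> cyc"
proof -
  obtain j where j: "j < ord s" "y = s [^] j" using y unfolding cyc_def by auto
  have "s [^] (ord s - j) \<otimes> y = \<one>" using j s_closed by (simp add: nat_pow_mult)
  then have "inv y = s [^] (ord s - j)" using j s_closed by (intro inv_equality) auto
  then show ?thesis using pow_in_cyc by simp
qed

lemma cyc_cancel:
  assumes "y \<in> cyc" "y \<otimes> z \<in> cyc" "z \<in> carrier G"
  shows "z \<in> cyc"
  using cyc_mult[OF cyc_inv[OF assms(1)] assms(2)] inv_mult_cancel_left[OF cyc_closed[OF assms(1)] assms(3)]
  by simp

lemma cyc_commute_s: "y \<in> cyc \<Longrightarrow> y \<otimes> s = s \<otimes> y"
  unfolding cyc_def using s_closed nat_pow_Suc2 by auto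

definition dlog :: "'a \<Rightarrow> nat" where
  "dlog y = (THE j. j < ord s \<and> s [^] j = y)"

lemma dlog_pow: "j < ord s \<Longrightarrow> dlog (s [^] j) = j"
  unfolding dlog_def using pow_s_inj by (intro the_equality) auto

lemma dlog: "y \<in> cyc \<Longrightarrow> dlog y < ord s \<and> s [^] (dlog y) = y"
  unfolding cyc_def using dlog_pow by auto

definition lam :: "'a \<Rightarrow> complex" where
  "lam y = cis (2 * pi / ord s) ^ dlog y"

lemma root_pow_ord: "cis (2 * pi / ord s) ^ ord s = 1"
  using ord_s_pos by (simp add: DeMoivre)

lemma lam_mult:
  assumes "y \<in> cyc" "z \<in> cyc"
  shows "lam (y \<otimes> z) = lam y * lam z"
proof -
  let ?\<zeta> = "cis (2 * pi / ord s)"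
  have "y \<otimes> z = s [^] ((dlog y + dlog z) mod ord s)"
    using dlog[OF assms(1)] dlog[OF assms(2)] pow_mod_ord s_closed by (metis nat_pow_mult)
  then have "dlog (y \<otimes> z) = (dlog y + dlog z) mod ord s" using dlog_pow ord_s_pos by simp
  moreover have "?\<zeta> ^ k = ?\<zeta> ^ (k mod ord s)" for k
  proof -
    have "?\<zeta> ^ k = (?\<zeta> ^ ord s) ^ (k div ord s) * ?\<zeta> ^ (k mod ord s)"
      by (simp only: power_mult[symmetric] power_add[symmetric] mult_div_mod_eq)
    then show ?thesis using root_pow_ord by simp
  qed
  ultimately show ?thesis unfolding lam_def by (metis power_add)
qed

lemma lam_one: "lam \<one> = 1"
  using dlog_pow[of 0] ord_s_pos unfolding lam_def by simp

lemma lam_inj: "y \<in> cyc \<Longrightarrow> z \<in> cyc \<Longrightarrow> lam y = lam z \<Longrightarrow> y = z"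
  using cis_root_power_inj[OF ord_s_pos] dlog unfolding lam_def by metis

lemma lam_pow_ord: "lam y ^ ord s = 1"
  unfolding lam_def by (metis power_mult mult.commute power_one root_pow_ord)

lemma lam_nonzero: "lam y \<noteq> 0"
  unfolding lam_def by (simp add: cis_neq_zero)

definition lcos :: "'a \<Rightarrow> 'a set" where
  "lcos x = (\<lambda>h. x \<otimes> h) ` cyc"

lemma lcos_mem:
  assumes x: "x \<in> carrier G" and y: "y \<in> carrier G"
  shows "y \<in> lcos x \<longleftrightarrow> inv x \<otimes> y \<in> cyc"
proof
  assume "y \<in> lcos x"
  then show "inv x \<otimes> y \<in> cyc"
    unfolding lcos_def using x cyc_closed inv_mult_cancel_left by auto
next
  assume "inv x \<otimes> y \<in> cyc"
  moreover have "y = x \<otimes> (inv x \<otimes> y)" using mult_inv_cancel_left x y by simp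
  ultimately show "y \<in> lcos x" unfolding lcos_def by blast
qed

lemma lcos_subset: "x \<in> carrier G \<Longrightarrow> lcos x \<subseteq> carrier G"
  unfolding lcos_def using cyc_closed by auto

lemma lcos_self: "x \<in> carrier G \<Longrightarrow> x \<in> lcos x"
  using lcos_mem one_in_cyc by simp

lemma finite_lcos: "x \<in> carrier G \<Longrightarrow> finite (lcos x)"
  using lcos_subset finite_carrier finite_subset by blast

lemma lcos_eq:
  assumes x: "x \<in> carrier G" and y: "y \<in> lcos x"
  shows "lcos y = lcos x"
proof -
  have yG: "y \<in> carrier G" using y lcos_subset x by auto
  have xy: "inv x \<otimes> y \<in> cyc" using lcos_mem x yG y by simp
  have "z \<in> lcos y \<longleftrightarrow> z \<in> lcos x" if z: "z \<in> carrier G" for z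
  proof -
    have eq: "inv x \<otimes> z = (inv x \<otimes> y) \<otimes> (inv y \<otimes> z)"
      using x yG z by (simp add: m_assoc mult_inv_cancel_left)
    show ?thesis unfolding lcos_mem[OF yG z] lcos_mem[OF x z] eq
      using cyc_mult[OF xy] cyc_cancel[OF xy] yG z by blast
  qed
  then show ?thesis using lcos_subset x yG by blast
qed

lemma card_lcos:
  assumes x: "x \<in> carrier G"
  shows "card (lcos x) = ord s"
proof -
  have "lcos x = (\<lambda>j. x \<otimes> s [^] j) ` {..<ord s}" unfolding lcos_def cyc_def by auto
  moreover have "inj_on (\<lambda>j. x \<otimes> s [^] j) {..<ord s}"
    using pow_s_inj x s_closed by (auto simp: inj_on_def)
  ultimately show ?thesis by (simp add: card_image)
qed

definition cos_rep :: "'a \<Rightarrow> 'a" where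
  "cos_rep x = (SOME y. y \<in> lcos x)"

lemma cos_rep: "x \<in> carrier G \<Longrightarrow> cos_rep x \<in> lcos x"
  unfolding cos_rep_def using lcos_self by (metis someI)

lemma cos_rep_eq: "x \<in> carrier G \<Longrightarrow> y \<in> lcos x \<Longrightarrow> cos_rep y = cos_rep x"
  unfolding cos_rep_def using lcos_eq by simp

lemma cos_rep_closed: "x \<in> carrier G \<Longrightarrow> cos_rep x \<in> carrier G"
  using cos_rep lcos_subset by blast

lemma cos_rep_idem: "x \<in> carrier G \<Longrightarrow> cos_rep (cos_rep x) = cos_rep x"
  using cos_rep_eq cos_rep by blast

definition transv :: "'a list" where
  "transv = (SOME l. set l = cos_rep ` carrier G \<and> distinct l)"

lemma transv: "set transv = cos_rep ` carrier G" "distinct transv"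
  unfolding transv_def using someI_ex[OF finite_distinct_list[OF finite_imageI[OF finite_carrier, of cos_rep]]]
  by auto

abbreviation N :: nat where
  "N \<equiv> length transv"

abbreviation tv :: "nat \<Rightarrow> 'a" where
  "tv a \<equiv> transv ! a"

lemma tv_cos_rep:
  assumes "a < N"
  obtains x where "x \<in> carrier G" "tv a = cos_rep x"
proof -
  have "tv a \<in> set transv" using assms by (rule nth_mem)
  then have "tv a \<in> cos_rep ` carrier G" unfolding transv(1) .
  then show ?thesis using that by blast
qed

lemma tv_closed: "a < N \<Longrightarrow> tv a \<in> carrier G"
  by (elim tv_cos_rep) (simp add: cos_rep_closed)

lemma cos_rep_tv: "a < N \<Longrightarrow> cos_rep (tv a) = tv a"
  by (elim tv_cos_rep) (simp add: cos_rep_idem)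

lemma tv_unique:
  assumes a: "a < N" and b: "b < N" and ba: "tv b \<in> lcos (tv a)"
  shows "a = b"
proof -
  have "tv a = tv b" using cos_rep_eq[OF tv_closed[OF a] ba] cos_rep_tv a b by simp
  then show ?thesis using transv(2) a b nth_eq_iff_index_eq by blast
qed

lemma tv_exists:
  assumes y: "y \<in> carrier G"
  shows "\<exists>a<N. y \<in> lcos (tv a)"
proof -
  have "cos_rep y \<in> set transv" unfolding transv(1) using y by (rule imageI)
  then obtain a where "a < N" "tv a = cos_rep y" by (auto simp: in_set_conv_nth)
  moreover have "y \<in> lcos (cos_rep y)" using lcos_eq[OF y cos_rep[OF y]] lcos_self[OF y] by simp
  ultimately show ?thesis by auto
qed

lemma lcos_disjoint:
  assumes a: "a < N" and b: "b < N" and ab: "a \<noteq> b"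
  shows "lcos (tv a) \<inter> lcos (tv b) = {}"
proof (rule ccontr)
  assume "lcos (tv a) \<inter> lcos (tv b) \<noteq> {}"
  then obtain y where y: "y \<in> lcos (tv a)" "y \<in> lcos (tv b)" by blast
  have "lcos (tv a) = lcos (tv b)"
    using lcos_eq[OF tv_closed[OF a] y(1)] lcos_eq[OF tv_closed[OF b] y(2)] by simp
  then have "tv b \<in> lcos (tv a)" using lcos_self[OF tv_closed[OF b]] by simp
  then show False using tv_unique a b ab by blast
qed

definition ind_rep :: "nat \<Rightarrow> 'a \<Rightarrow> nat \<Rightarrow> nat \<Rightarrow> complex" where
  "ind_rep t g a b =
     (if inv (tv a) \<otimes> (g \<otimes> tv b) \<in> cyc then lam (inv (tv a) \<otimes> (g \<otimes> tv b)) ^ t else 0)"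

lemma ind_rep_one:
  assumes a: "a < N" and b: "b < N"
  shows "ind_rep t \<one> a b = (if a = b then 1 else 0)"
proof (cases "a = b")
  case True
  then show ?thesis unfolding ind_rep_def using tv_closed[OF a] one_in_cyc lam_one by simp
next
  case False
  then have "tv b \<notin> lcos (tv a)" using tv_unique a b by blast
  then have "inv (tv a) \<otimes> (\<one> \<otimes> tv b) \<notin> cyc"
    using lcos_mem[OF tv_closed[OF a] tv_closed[OF b]] tv_closed[OF b] by simp
  then show ?thesis unfolding ind_rep_def using False by simp
qed

lemma ind_rep_mult:
  assumes g: "g \<in> carrier G" and h: "h \<in> carrier G" and a: "a < N" and b: "b < N"
  shows "ind_rep t (g \<otimes> h) a b = (\<Sum>k<N. ind_rep t g a k * ind_rep t h k b)"
proof -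
  have xa: "tv a \<in> carrier G" and xb: "tv b \<in> carrier G" using tv_closed a b by auto
  have iga: "inv g \<otimes> tv a \<in> carrier G" using g xa by simp
  obtain k0 where k0: "k0 < N" "inv g \<otimes> tv a \<in> lcos (tv k0)" using tv_exists[OF iga] by blast
  have xk0: "tv k0 \<in> carrier G" using tv_closed k0 by auto
  have iff: "inv (tv a) \<otimes> (g \<otimes> tv k) \<in> cyc \<longleftrightarrow> k = k0" if k: "k < N" for k
  proof -
    have xk: "tv k \<in> carrier G" using tv_closed k by auto
    have e: "inv (inv g \<otimes> tv a) \<otimes> tv k = inv (tv a) \<otimes> (g \<otimes> tv k)"
      using g xa xk by (simp add: inv_mult_group m_assoc)
    have "inv (tv a) \<otimes> (g \<otimes> tv k) \<in> cyc \<longleftrightarrow> tv k \<in> lcos (inv g \<otimes> tv a)"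
      using lcos_mem[OF iga xk] e by simp
    also have "lcos (inv g \<otimes> tv a) = lcos (tv k0)" using lcos_eq[OF xk0 k0(2)] .
    also have "tv k \<in> lcos (tv k0) \<longleftrightarrow> k = k0"
      using tv_unique[OF k0(1) k] lcos_self[OF xk0] by blast
    finally show ?thesis .
  qed
  have "(\<Sum>k<N. ind_rep t g a k * ind_rep t h k b)
      = (\<Sum>k<N. if k = k0 then ind_rep t g a k0 * ind_rep t h k0 b else 0)"
    by (intro sum.cong refl) (auto simp: ind_rep_def iff)
  also have "\<dots> = ind_rep t g a k0 * ind_rep t h k0 b" using k0 by simp
  finally have sum_eq: "(\<Sum>k<N. ind_rep t g a k * ind_rep t h k b) = ind_rep t g a k0 * ind_rep t h k0 b" .
  define y where "y = inv (tv a) \<otimes> (g \<otimes> tv k0)"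
  define z where "z = inv (tv k0) \<otimes> (h \<otimes> tv b)"
  have yH: "y \<in> cyc" using iff[OF k0(1)] y_def by simp
  have zG: "z \<in> carrier G" unfolding z_def using xk0 h xb by simp
  have yz: "inv (tv a) \<otimes> ((g \<otimes> h) \<otimes> tv b) = y \<otimes> z"
    unfolding y_def z_def using xa xb xk0 g h by (simp add: m_assoc mult_inv_cancel_left)
  show ?thesis
  proof (cases "z \<in> cyc")
    case True
    have "ind_rep t (g \<otimes> h) a b = lam (y \<otimes> z) ^ t"
      unfolding ind_rep_def yz using cyc_mult[OF yH True] by simp
    also have "\<dots> = ind_rep t g a k0 * ind_rep t h k0 b"
      unfolding ind_rep_def using lam_mult[OF yH True] yH True y_def z_def by (simp add: power_mult_distrib)
    finally show ?thesis using sum_eq by simp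
  next
    case False
    have "y \<otimes> z \<notin> cyc" using cyc_cancel[OF yH _ zG] False by blast
    then have "ind_rep t (g \<otimes> h) a b = 0" unfolding ind_rep_def yz by simp
    moreover have "ind_rep t h k0 b = 0" unfolding ind_rep_def using False z_def by simp
    ultimately show ?thesis using sum_eq by simp
  qed
qed

definition fix_count :: "'a \<Rightarrow> nat" where
  "fix_count g = card {a\<in>{..<N}. g \<otimes> tv a = tv a \<otimes> s}"

text \<open>The condition \<open>g x = x s\<close> depends only on the coset \<open>x H\<close>, since \<open>H\<close> centralises \<open>s\<close>.\<close>
lemma card_conjugators:
  assumes g: "g \<in> carrier G"
  shows "card {x \<in> carrier G. g \<otimes> x = x \<otimes> s} = ord s * fix_count g"
proof -
  let ?A = "\<lambda>a. {x \<in> lcos (tv a). g \<otimes> x = x \<otimes> s}"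
  have un: "{x \<in> carrier G. g \<otimes> x = x \<otimes> s} = (\<Union>a\<in>{..<N}. ?A a)"
    using tv_exists lcos_subset tv_closed by blast
  have "card (?A a) = (if g \<otimes> tv a = tv a \<otimes> s then ord s else 0)" if a: "a < N" for a
  proof -
    have xa: "tv a \<in> carrier G" using tv_closed a by simp
    have "g \<otimes> (tv a \<otimes> h) = (tv a \<otimes> h) \<otimes> s \<longleftrightarrow> g \<otimes> tv a = tv a \<otimes> s" if h: "h \<in> cyc" for h
    proof -
      have hG: "h \<in> carrier G" using cyc_closed h by simp
      have "(tv a \<otimes> h) \<otimes> s = (tv a \<otimes> s) \<otimes> h"
        using cyc_commute_s[OF h] xa hG s_closed by (simp add: m_assoc)
      moreover have "g \<otimes> (tv a \<otimes> h) = (g \<otimes> tv a) \<otimes> h" using g xa hG by (simp add: m_assoc)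
      ultimately show ?thesis using right_cancel[OF hG] g xa s_closed by simp
    qed
    then have "?A a = (if g \<otimes> tv a = tv a \<otimes> s then lcos (tv a) else {})"
      unfolding lcos_def by auto
    then show ?thesis using card_lcos[OF xa] by simp
  qed
  moreover have "?A a \<inter> ?A b = {}" if "a < N" "b < N" "a \<noteq> b" for a b
    using lcos_disjoint[OF that] by blast
  ultimately have "card {x \<in> carrier G. g \<otimes> x = x \<otimes> s} = (\<Sum>a<N. if g \<otimes> tv a = tv a \<otimes> s then ord s else 0)"
    unfolding un using finite_lcos tv_closed by (subst card_UN_disjoint) auto
  also have "\<dots> = ord s * fix_count g"
    unfolding fix_count_def by (simp add: sum.If_cases Int_def)
  finally show ?thesis .
qed

lemma card_conjugators_conj:
  assumes g: "g \<in> carrier G" and t: "\<tau> \<in> carrier G" and gt: "g \<otimes> \<tau> = \<tau> \<otimes> s"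
  shows "card {x \<in> carrier G. g \<otimes> x = x \<otimes> s} = card {x \<in> carrier G. s \<otimes> x = x \<otimes> s}"
proof -
  have "g = (g \<otimes> \<tau>) \<otimes> inv \<tau>" using g t by (simp add: m_assoc)
  then have g_eq: "g = \<tau> \<otimes> s \<otimes> inv \<tau>" using gt by simp
  have key: "g \<otimes> x = x \<otimes> s \<longleftrightarrow> s \<otimes> (inv \<tau> \<otimes> x) = (inv \<tau> \<otimes> x) \<otimes> s" if x: "x \<in> carrier G" for x
  proof -
    have "g \<otimes> x = \<tau> \<otimes> (s \<otimes> (inv \<tau> \<otimes> x))" using g_eq t x s_closed by (simp add: m_assoc)
    moreover have "x \<otimes> s = \<tau> \<otimes> ((inv \<tau> \<otimes> x) \<otimes> s)"
      using t x s_closed by (simp add: m_assoc mult_inv_cancel_left)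
    ultimately show ?thesis using t x s_closed by simp
  qed
  have "bij_betw (\<lambda>x. inv \<tau> \<otimes> x) {x \<in> carrier G. g \<otimes> x = x \<otimes> s} {x \<in> carrier G. s \<otimes> x = x \<otimes> s}"
    by (rule bij_betwI[where g = "\<lambda>y. \<tau> \<otimes> y"])
       (use key t mult_inv_cancel_left inv_mult_cancel_left in auto)
  then show ?thesis by (rule bij_betw_same_card)
qed

lemma fix_count_conj:
  assumes g: "g \<in> carrier G" and t: "\<tau> \<in> carrier G" and gt: "g \<otimes> \<tau> = \<tau> \<otimes> s"
  shows "fix_count g = fix_count s"
  using card_conjugators[OF g] card_conjugators[OF s_closed] card_conjugators_conj[OF g t gt] ord_s_pos
  by simp

lemma fix_count_pos: "fix_count s > 0"
proof -
  obtain a where a: "a < N" "\<one> \<in> lcos (tv a)" using tv_exists[of \<one>] by auto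
  then have "inv (tv a) \<in> cyc" using lcos_mem tv_closed by simp
  then have "tv a \<in> cyc" using cyc_inv tv_closed[OF a(1)] by fastforce
  then have "a \<in> {a\<in>{..<N}. s \<otimes> tv a = tv a \<otimes> s}" using a cyc_commute_s by simp
  moreover have "finite {a\<in>{..<N}. s \<otimes> tv a = tv a \<otimes> s}" by simp
  ultimately show ?thesis unfolding fix_count_def using card_gt_0_iff by blast
qed

lemma fix_count_nonconj: "\<not> (\<exists>\<tau>\<in>carrier G. g \<otimes> \<tau> = \<tau> \<otimes> s) \<Longrightarrow> fix_count g = 0"
  unfolding fix_count_def using tv_closed by auto

definition ind_coeff :: "nat \<Rightarrow> complex" where
  "ind_coeff t = inverse (lam s ^ t) / (of_nat (ord s) * of_nat (fix_count s))"

lemma ind_coeff_orthogonality: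
  assumes y: "y \<in> cyc"
  shows "(\<Sum>t<ord s. ind_coeff t * lam y ^ t) = (if y = s then 1 / of_nat (fix_count s) else 0)"
proof -
  let ?z = "lam y / lam s"
  have "(\<Sum>t<ord s. ind_coeff t * lam y ^ t) = (\<Sum>t<ord s. ?z ^ t) / (of_nat (ord s) * of_nat (fix_count s))"
    unfolding ind_coeff_def by (simp add: sum_divide_distrib power_divide field_simps)
  also have "(\<Sum>t<ord s. ?z ^ t) = (if y = s then of_nat (ord s) else 0)"
  proof (cases "y = s")
    case True
    then show ?thesis using lam_nonzero by simp
  next
    case False
    then have "?z \<noteq> 1" using lam_inj[OF y s_in_cyc] lam_nonzero by auto
    moreover have "?z ^ ord s = 1" using lam_pow_ord lam_nonzero by (simp add: power_divide)
    ultimately show ?thesis using False lam_nonzero[of s] by (simp add: sum_gp_strict)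
  qed
  finally show ?thesis using ord_s_pos by auto
qed

lemma class_indicator_eq_sum:
  assumes g: "g \<in> carrier G"
  shows "(\<Sum>t<ord s. ind_coeff t * rep_char N (ind_rep t) g)
       = (if \<exists>\<tau>\<in>carrier G. g \<otimes> \<tau> = \<tau> \<otimes> s then 1 else 0)"
proof -
  have diag: "(\<Sum>t<ord s. ind_coeff t * ind_rep t g a a)
      = (if g \<otimes> tv a = tv a \<otimes> s then 1 / of_nat (fix_count s) else 0)" if a: "a < N" for a
  proof -
    define y where "y = inv (tv a) \<otimes> (g \<otimes> tv a)"
    have "y = s \<longleftrightarrow> g \<otimes> tv a = tv a \<otimes> s"
      unfolding y_def using inv_solve_left'[OF s_closed tv_closed[OF a]] g tv_closed[OF a] by auto
    then show ?thesis
      using ind_coeff_orthogonality[of y] s_in_cyc unfolding ind_rep_def y_def[symmetric]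
      by (cases "y \<in> cyc") auto
  qed
  have "(\<Sum>t<ord s. ind_coeff t * rep_char N (ind_rep t) g) = (\<Sum>a<N. \<Sum>t<ord s. ind_coeff t * ind_rep t g a a)"
    unfolding rep_char_def by (simp add: sum_distrib_left sum.swap[of _ "{..<ord s}"])
  also have "\<dots> = of_nat (fix_count g) / of_nat (fix_count s)"
    by (simp add: diag sum.If_cases Int_def fix_count_def)
  also have "\<dots> = (if \<exists>\<tau>\<in>carrier G. g \<otimes> \<tau> = \<tau> \<otimes> s then 1 else 0)"
    using fix_count_conj[OF g] fix_count_nonconj fix_count_pos by auto
  finally show ?thesis .
qed

end

section \<open>Categories of FI type\<close>

locale FI_category =
  fixes C :: "('o, 'm) cat"
  assumes FI: "FI_type C"
begin

lemma is_cat: "is_category C" using FI unfolding FI_type_def by blast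

lemma hom_obj: "f \<in> Hom C a b \<Longrightarrow> a \<in> Obj C \<and> b \<in> Obj C"
  using is_cat unfolding is_category_def by (metis empty_iff)

lemma id_hom: "a \<in> Obj C \<Longrightarrow> idm C a \<in> Hom C a a"
  using is_cat unfolding is_category_def by (metis empty_iff)

lemma comp_hom: "f \<in> Hom C a b \<Longrightarrow> g \<in> Hom C b c \<Longrightarrow> cmp C g f \<in> Hom C a c"
  using is_cat unfolding is_category_def by (metis empty_iff)

lemma comp_assoc: "f \<in> Hom C a b \<Longrightarrow> g \<in> Hom C b c \<Longrightarrow> h \<in> Hom C c d \<Longrightarrow>
        cmp C h (cmp C g f) = cmp C (cmp C h g) f"
  using is_cat unfolding is_category_def by (metis empty_iff)

lemma id_left: "f \<in> Hom C a b \<Longrightarrow> cmp C (idm C b) f = f"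
  using is_cat unfolding is_category_def by (metis empty_iff)

lemma id_right: "f \<in> Hom C a b \<Longrightarrow> cmp C f (idm C a) = f"
  using is_cat unfolding is_category_def by (metis empty_iff)

lemma finite_Hom: "finite (Hom C a b)"
  using FI[unfolded FI_type_def, THEN conjunct2, THEN conjunct1] by blast

lemma mono_cancel: "f \<in> Hom C a b \<Longrightarrow> g \<in> Hom C e a \<Longrightarrow> h \<in> Hom C e a \<Longrightarrow> cmp C f g = cmp C f h \<Longrightarrow> g = h"
  using FI[unfolded FI_type_def, THEN conjunct2, THEN conjunct2, THEN conjunct1] by blast

lemma endo_aut: "f \<in> Hom C c c \<Longrightarrow> f \<in> Aut C c"
  using FI[unfolded FI_type_def, THEN conjunct2, THEN conjunct2, THEN conjunct2, THEN conjunct1] by blast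

lemma Aut_eq_Hom: "Aut C c = Hom C c c"
  using endo_aut unfolding Aut_def by blast

lemma aut_inv_ex: "g \<in> Aut C c \<Longrightarrow> \<exists>h\<in>Aut C c. cmp C h g = idm C c \<and> cmp C g h = idm C c"
  unfolding Aut_def by auto

definition aut_inv :: "'o \<Rightarrow> 'm \<Rightarrow> 'm" where
  "aut_inv c g = (SOME h. h \<in> Aut C c \<and> cmp C h g = idm C c \<and> cmp C g h = idm C c)"

lemma aut_inv: assumes "g \<in> Aut C c"
  shows "aut_inv c g \<in> Aut C c" "cmp C (aut_inv c g) g = idm C c" "cmp C g (aut_inv c g) = idm C c"
  using someI_ex[OF aut_inv_ex[OF assms, unfolded Bex_def]] unfolding aut_inv_def by auto

lemma Aut_Hom: "g \<in> Aut C c \<Longrightarrow> g \<in> Hom C c c" unfolding Aut_def by auto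

lemma Aut_Obj: "g \<in> Aut C c \<Longrightarrow> c \<in> Obj C" using Aut_Hom hom_obj by blast

lemma id_Aut: "c \<in> Obj C \<Longrightarrow> idm C c \<in> Aut C c" using id_hom Aut_eq_Hom by auto

lemma comp_Aut: "g \<in> Aut C c \<Longrightarrow> h \<in> Aut C c \<Longrightarrow> cmp C g h \<in> Aut C c"
  using comp_hom Aut_eq_Hom by auto

lemma finite_Aut: "finite (Aut C c)" using finite_Hom Aut_eq_Hom by auto

lemma aut_assoc: "g \<in> Aut C c \<Longrightarrow> h \<in> Aut C c \<Longrightarrow> k \<in> Aut C c \<Longrightarrow> cmp C g (cmp C h k) = cmp C (cmp C g h) k"
  using comp_assoc[of k c c h c g c] Aut_Hom by blast

lemma hom_aut_assoc: "f \<in> Hom C c e \<Longrightarrow> g \<in> Aut C c \<Longrightarrow> h \<in> Aut C c \<Longrightarrow> cmp C f (cmp C g h) = cmp C (cmp C f g) h"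
  using comp_assoc[of h c c g c f e] Aut_Hom by blast

lemma aut_hom_aut_assoc: "s \<in> Aut C e \<Longrightarrow> f \<in> Hom C c e \<Longrightarrow> g \<in> Aut C c \<Longrightarrow> cmp C s (cmp C f g) = cmp C (cmp C s f) g"
  using comp_assoc[of g c c f e s e] Aut_Hom by blast

lemma Aut_comp_Hom: "s \<in> Aut C e \<Longrightarrow> f \<in> Hom C c e \<Longrightarrow> cmp C s f \<in> Hom C c e"
  using comp_hom Aut_Hom by blast

lemma aut_id_left: "g \<in> Aut C c \<Longrightarrow> cmp C (idm C c) g = g" using id_left Aut_Hom by blast

lemma aut_id_right: "g \<in> Aut C c \<Longrightarrow> cmp C g (idm C c) = g" using id_right Aut_Hom by blast

definition aut_group :: "'o \<Rightarrow> 'm monoid" where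
  "aut_group c = \<lparr>carrier = Aut C c, mult = cmp C, one = idm C c\<rparr>"

lemma group_aut_group: assumes c: "c \<in> Obj C" shows "group (aut_group c)"
proof (rule groupI)
  show "x \<otimes>\<^bsub>aut_group c\<^esub> y \<in> carrier (aut_group c)" if "x \<in> carrier (aut_group c)" "y \<in> carrier (aut_group c)" for x y
    using that comp_Aut unfolding aut_group_def by simp
  show "\<one>\<^bsub>aut_group c\<^esub> \<in> carrier (aut_group c)" using id_Aut c unfolding aut_group_def by simp
  show "x \<otimes>\<^bsub>aut_group c\<^esub> y \<otimes>\<^bsub>aut_group c\<^esub> z = x \<otimes>\<^bsub>aut_group c\<^esub> (y \<otimes>\<^bsub>aut_group c\<^esub> z)"
    if "x \<in> carrier (aut_group c)" "y \<in> carrier (aut_group c)" "z \<in> carrier (aut_group c)" for x y z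
    using that aut_assoc unfolding aut_group_def by simp
  show "\<one>\<^bsub>aut_group c\<^esub> \<otimes>\<^bsub>aut_group c\<^esub> x = x" if "x \<in> carrier (aut_group c)" for x
    using that aut_id_left unfolding aut_group_def by simp
  show "\<exists>y\<in>carrier (aut_group c). y \<otimes>\<^bsub>aut_group c\<^esub> x = \<one>\<^bsub>aut_group c\<^esub>" if "x \<in> carrier (aut_group c)" for x
  proof -
    have x: "x \<in> Aut C c" using that by (simp add: aut_group_def)
    show ?thesis unfolding aut_group_def using aut_inv[OF x] by auto
  qed
qed

abbreviation Orb :: "'o \<Rightarrow> 'm \<Rightarrow> 'm set" where
  "Orb c f \<equiv> orbit_cls C c f"

lemma orbit_subset: "f \<in> Hom C c e \<Longrightarrow> Orb c f \<subseteq> Hom C c e"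
  unfolding orbit_cls_def using comp_hom Aut_Hom by blast

lemma orbit_self: "f \<in> Hom C c e \<Longrightarrow> f \<in> Orb c f"
  unfolding orbit_cls_def using id_right[of f c e] id_Aut hom_obj by (metis (mono_tags, lifting) mem_Collect_eq)

lemma orbit_mem: "f' \<in> Orb c f \<longleftrightarrow> (\<exists>g\<in>Aut C c. f' = cmp C f g)"
  unfolding orbit_cls_def by auto

lemma orbit_eq: assumes f: "f \<in> Hom C c e" and f': "f' \<in> Orb c f" shows "Orb c f' = Orb c f"
proof -
  obtain g where g: "g \<in> Aut C c" "f' = cmp C f g" using f' orbit_mem by auto
  have gh: "g \<in> Hom C c c" using g Aut_Hom by auto
  show ?thesis
  proof
    show "Orb c f' \<subseteq> Orb c f"
    proof
      fix x assume "x \<in> Orb c f'"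
      then obtain h where h: "h \<in> Aut C c" "x = cmp C f' h" using orbit_mem by auto
      have "x = cmp C f (cmp C g h)" using h g comp_assoc[of h c c g c f e] Aut_Hom f by auto
      then show "x \<in> Orb c f" using orbit_mem comp_Aut g h by auto
    qed
  next
    show "Orb c f \<subseteq> Orb c f'"
    proof
      fix x assume "x \<in> Orb c f"
      then obtain h where h: "h \<in> Aut C c" "x = cmp C f h" using orbit_mem by auto
      have "cmp C f' (cmp C (aut_inv c g) h) = cmp C (cmp C f' (aut_inv c g)) h"
        using comp_assoc[of h c c "aut_inv c g" c f' e] h aut_inv[OF g(1)] Aut_Hom comp_hom[OF gh f] g by auto
      also have "cmp C f' (aut_inv c g) = cmp C f (cmp C g (aut_inv c g))"
        using g(2) comp_assoc[of "aut_inv c g" c c g c f e] aut_inv[OF g(1)] Aut_Hom gh f by auto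
      also have "\<dots> = f" using aut_inv[OF g(1)] id_right[OF f] by simp
      finally have "x = cmp C f' (cmp C (aut_inv c g) h)" using h by simp
      then show "x \<in> Orb c f'" using orbit_mem comp_Aut aut_inv[OF g(1)] h by auto
    qed
  qed
qed

definition orb_rep :: "'o \<Rightarrow> 'm \<Rightarrow> 'm" where
  "orb_rep c f = (SOME h. h \<in> Orb c f)"

lemma orb_rep_in_orbit: "f \<in> Hom C c e \<Longrightarrow> orb_rep c f \<in> Orb c f"
  unfolding orb_rep_def using orbit_self by (metis someI_ex)

lemma orb_rep_Hom: "f \<in> Hom C c e \<Longrightarrow> orb_rep c f \<in> Hom C c e"
  using orb_rep_in_orbit orbit_subset by blast

lemma orb_rep_eq: "f \<in> Hom C c e \<Longrightarrow> f' \<in> Orb c f \<Longrightarrow> orb_rep c f' = orb_rep c f"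
  unfolding orb_rep_def using orbit_eq by simp

lemma orb_rep_idem: "f \<in> Hom C c e \<Longrightarrow> orb_rep c (orb_rep c f) = orb_rep c f"
  using orb_rep_eq orb_rep_in_orbit by blast

lemma orbit_orb_rep: "f \<in> Hom C c e \<Longrightarrow> Orb c (orb_rep c f) = Orb c f"
  using orbit_eq orb_rep_in_orbit by blast

lemma orb_rep_comp: "f \<in> Hom C c e \<Longrightarrow> g \<in> Aut C c \<Longrightarrow> orb_rep c (cmp C f g) = orb_rep c f"
  using orb_rep_eq orbit_mem by blast

lemma orb_aut_ex: assumes f: "f \<in> Hom C c e" shows "\<exists>!g. g \<in> Aut C c \<and> cmp C (orb_rep c f) g = f"
proof -
  have "f \<in> Orb c (orb_rep c f)" using orbit_orb_rep[OF f] orbit_self[OF f] by simp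
  then obtain g where g: "g \<in> Aut C c" "f = cmp C (orb_rep c f) g" using orbit_mem by auto
  moreover have "g' = g" if "g' \<in> Aut C c" "cmp C (orb_rep c f) g' = f" for g'
    using mono_cancel[of "orb_rep c f" c e g' c g] that g orb_rep_Hom[OF f] Aut_Hom by auto
  ultimately show ?thesis by metis
qed

definition orb_aut :: "'o \<Rightarrow> 'm \<Rightarrow> 'm" where
  "orb_aut c f = (THE g. g \<in> Aut C c \<and> cmp C (orb_rep c f) g = f)"

lemma orb_aut: assumes "f \<in> Hom C c e" shows "orb_aut c f \<in> Aut C c" "cmp C (orb_rep c f) (orb_aut c f) = f"
  using theI'[OF orb_aut_ex[OF assms]] unfolding orb_aut_def by auto

lemma orb_aut_unique: "f \<in> Hom C c e \<Longrightarrow> g \<in> Aut C c \<Longrightarrow> cmp C (orb_rep c f) g = f \<Longrightarrow> orb_aut c f = g"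
  using orb_aut_ex orb_aut by blast

lemma orb_aut_comp: assumes f: "f \<in> Hom C c e" and g: "g \<in> Aut C c"
  shows "orb_aut c (cmp C f g) = cmp C (orb_aut c f) g"
proof (rule orb_aut_unique)
  show "cmp C f g \<in> Hom C c e" using comp_hom f Aut_Hom g by blast
  show "cmp C (orb_aut c f) g \<in> Aut C c" using comp_Aut orb_aut(1)[OF f] g by blast
  have "cmp C (orb_rep c f) (cmp C (orb_aut c f) g) = cmp C (cmp C (orb_rep c f) (orb_aut c f)) g"
    using comp_assoc[of g c c "orb_aut c f" c "orb_rep c f" e] g orb_aut(1)[OF f] Aut_Hom orb_rep_Hom[OF f] by auto
  then show "cmp C (orb_rep c (cmp C f g)) (cmp C (orb_aut c f) g) = cmp C f g"
    using orb_rep_comp[OF f g] orb_aut(2)[OF f] by simp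
qed

definition orb_reps :: "'o \<Rightarrow> 'o \<Rightarrow> 'm set" where
  "orb_reps c e = {r \<in> Hom C c e. orb_rep c r = r}"

lemma finite_orb_reps: "finite (orb_reps c e)" unfolding orb_reps_def using finite_Hom by auto

definition conj_to :: "'o \<Rightarrow> 'm \<Rightarrow> 'm \<Rightarrow> bool" where
  "conj_to c a b \<longleftrightarrow> (\<exists>\<tau>\<in>Aut C c. cmp C a \<tau> = cmp C \<tau> b)"

definition conj_cls :: "'o \<Rightarrow> 'm \<Rightarrow> 'm set" where
  "conj_cls c b = {a \<in> Aut C c. conj_to c a b}"

lemma conj_class_iff: "conj_class C c \<mu> \<longleftrightarrow> (\<exists>s\<in>Aut C c. \<mu> = conj_cls c s)"
  unfolding conj_class_def conj_cls_def conj_to_def by simp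

lemma conj_to_refl: "a \<in> Aut C c \<Longrightarrow> conj_to c a a"
  unfolding conj_to_def using id_Aut Aut_Obj aut_id_left aut_id_right by metis

lemma conj_to_sym: assumes a: "a \<in> Aut C c" and b: "b \<in> Aut C c" and conj_to: "conj_to c a b" shows "conj_to c b a"
proof -
  obtain \<tau> where t: "\<tau> \<in> Aut C c" "cmp C a \<tau> = cmp C \<tau> b" using conj_to unfolding conj_to_def by auto
  note iv = aut_inv[OF t(1)]
  have "cmp C (aut_inv c \<tau>) a = cmp C (aut_inv c \<tau>) (cmp C a (cmp C \<tau> (aut_inv c \<tau>)))" using iv aut_id_right a by simp
  also have "\<dots> = cmp C (aut_inv c \<tau>) (cmp C (cmp C a \<tau>) (aut_inv c \<tau>))" using aut_assoc[OF a t(1) iv(1)] by simp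
  also have "\<dots> = cmp C (aut_inv c \<tau>) (cmp C \<tau> (cmp C b (aut_inv c \<tau>)))" using t(2) aut_assoc[OF t(1) b iv(1)] by simp
  also have "\<dots> = cmp C (cmp C (aut_inv c \<tau>) \<tau>) (cmp C b (aut_inv c \<tau>))"
    using aut_assoc[OF iv(1) t(1) comp_Aut[OF b iv(1)]] by simp
  also have "\<dots> = cmp C b (aut_inv c \<tau>)" using iv aut_id_left comp_Aut[OF b iv(1)] by simp
  finally show ?thesis unfolding conj_to_def using iv(1) by metis
qed

lemma conj_to_trans: assumes a: "a \<in> Aut C c" and b: "b \<in> Aut C c" and d: "d \<in> Aut C c"
  and ab: "conj_to c a b" and bd: "conj_to c b d" shows "conj_to c a d"
proof -
  obtain \<tau> where t: "\<tau> \<in> Aut C c" "cmp C a \<tau> = cmp C \<tau> b" using ab unfolding conj_to_def by auto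
  obtain \<tau>' where t': "\<tau>' \<in> Aut C c" "cmp C b \<tau>' = cmp C \<tau>' d" using bd unfolding conj_to_def by auto
  have "cmp C a (cmp C \<tau> \<tau>') = cmp C (cmp C a \<tau>) \<tau>'" using aut_assoc[OF a t(1) t'(1)] .
  also have "\<dots> = cmp C \<tau> (cmp C b \<tau>')" using t(2) aut_assoc[OF t(1) b t'(1)] by simp
  also have "\<dots> = cmp C (cmp C \<tau> \<tau>') d" using t'(2) aut_assoc[OF t(1) t'(1) d] by simp
  finally show ?thesis unfolding conj_to_def using comp_Aut[OF t(1) t'(1)] by blast
qed

lemma conj_cls_subset: "conj_cls c b \<subseteq> Aut C c" unfolding conj_cls_def by auto

lemma conj_cls_self: "b \<in> Aut C c \<Longrightarrow> b \<in> conj_cls c b" unfolding conj_cls_def using conj_to_refl by auto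

lemma conj_cls_eq: assumes "s \<in> Aut C c" "a \<in> conj_cls c s" shows "conj_cls c a = conj_cls c s"
  using assms conj_to_trans conj_to_sym unfolding conj_cls_def by blast

lemma conj_cls_closed: assumes s: "s \<in> Aut C c" and a: "a \<in> conj_cls c s" and b: "b \<in> Aut C c" and ba: "conj_to c b a"
  shows "b \<in> conj_cls c s"
  using assms conj_to_trans unfolding conj_cls_def by blast

definition conj_classes :: "'o \<Rightarrow> 'm set set" where
  "conj_classes c = {\<mu>. conj_class C c \<mu>}"

lemma finite_conj_classes: "finite (conj_classes c)"
proof -
  have "conj_classes c \<subseteq> Pow (Aut C c)" unfolding conj_classes_def conj_class_iff using conj_cls_subset by auto
  then show ?thesis using finite_Aut finite_subset by blast
qed

definition cls_rep :: "'m set \<Rightarrow> 'm" where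
  "cls_rep \<mu> = (SOME x. x \<in> \<mu>)"

lemma cls_rep: assumes "\<mu> \<in> conj_classes c" shows "cls_rep \<mu> \<in> \<mu>"
proof -
  have "conj_class C c \<mu>" using assms by (simp add: conj_classes_def)
  then obtain s where s: "s \<in> Aut C c" "\<mu> = conj_cls c s" unfolding conj_class_iff by blast
  then have "s \<in> \<mu>" using conj_cls_self by simp
  then show ?thesis unfolding cls_rep_def by (rule someI)
qed

lemma conj_classes_containing: assumes a: "a \<in> Aut C c" shows "{\<mu> \<in> conj_classes c. a \<in> \<mu>} = {conj_cls c a}"
proof -
  have h1: "\<mu> = conj_cls c a" if "\<mu> \<in> conj_classes c" "a \<in> \<mu>" for \<mu>
  proof -
    have "conj_class C c \<mu>" using that by (simp add: conj_classes_def)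
    then obtain s where s: "s \<in> Aut C c" "\<mu> = conj_cls c s" unfolding conj_class_iff by blast
    then show ?thesis using conj_cls_eq[OF s(1)] that by simp
  qed
  have h2: "conj_cls c a \<in> conj_classes c" unfolding conj_classes_def conj_class_iff using a by blast
  have h3: "a \<in> conj_cls c a" using conj_cls_self[OF a] .
  show ?thesis
  proof (rule Set.set_eqI)
    fix \<mu> show "\<mu> \<in> {\<mu> \<in> conj_classes c. a \<in> \<mu>} \<longleftrightarrow> \<mu> \<in> {conj_cls c a}"
      using h1 h2 h3 by blast
  qed
qed

lemma rep_char_commute:
  assumes rep: "is_rep C c n \<rho>" and x: "x \<in> Aut C c" and y: "y \<in> Aut C c"
  shows "rep_char n \<rho> (cmp C x y) = rep_char n \<rho> (cmp C y x)"
proof -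
  have m: "\<rho> (cmp C g h) i j = (\<Sum>k<n. \<rho> g i k * \<rho> h k j)" if "g \<in> Aut C c" "h \<in> Aut C c" "i < n" "j < n" for g h i j
    using rep that unfolding is_rep_def by blast
  have "rep_char n \<rho> (cmp C x y) = (\<Sum>i<n. \<Sum>k<n. \<rho> x i k * \<rho> y k i)"
    unfolding rep_char_def by (intro sum.cong refl) (rule m[OF x y]; simp)
  also have "\<dots> = (\<Sum>k<n. \<Sum>i<n. \<rho> x i k * \<rho> y k i)" by (rule sum.swap)
  also have "\<dots> = (\<Sum>k<n. \<Sum>i<n. \<rho> y k i * \<rho> x i k)"
    by (intro sum.cong refl) (rule mult.commute)
  also have "\<dots> = rep_char n \<rho> (cmp C y x)"
    unfolding rep_char_def by (intro sum.cong refl) (rule m[OF y x, symmetric]; simp)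
  finally show ?thesis .
qed

lemma rep_char_conj:
  assumes rep: "is_rep C c n \<rho>" and a: "a \<in> Aut C c" and b: "b \<in> Aut C c" and ab: "conj_to c a b"
  shows "rep_char n \<rho> a = rep_char n \<rho> b"
proof -
  obtain \<tau> where t: "\<tau> \<in> Aut C c" "cmp C a \<tau> = cmp C \<tau> b" using ab unfolding conj_to_def by auto
  note iv = aut_inv[OF t(1)]
  have "b = cmp C (aut_inv c \<tau>) (cmp C a \<tau>)"
    using t(2) aut_assoc[OF iv(1) t(1) b] iv(2) aut_id_left[OF b] by simp
  then have "rep_char n \<rho> b = rep_char n \<rho> (cmp C (cmp C a \<tau>) (aut_inv c \<tau>))"
    using rep_char_commute[OF rep iv(1) comp_Aut[OF a t(1)]] by simp
  also have "cmp C (cmp C a \<tau>) (aut_inv c \<tau>) = a"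
    using aut_assoc[OF a t(1) iv(1), symmetric] iv(3) aut_id_right[OF a] by simp
  finally show ?thesis by (rule sym)
qed

end

section \<open>The character of a free module at a fixed object\<close>

lemma sum_delta_scale:
  assumes "finite A"
  shows "(\<Sum>y\<in>A. cscale (delta x y) (F y)) = (if x \<in> A then F x else 0)"
proof -
  have "(\<Sum>y\<in>A. cscale (delta x y) (F y)) = (\<Sum>y\<in>A. if y = x then F y else 0)"
    by (intro sum.cong refl) (auto simp: delta_def fun_eq_iff)
  also have "\<dots> = (if x \<in> A then F x else 0)" using assms by (simp add: sum.delta')
  finally show ?thesis .
qed

lemma sum_delta_mult:
  assumes "finite A"
  shows "(\<Sum>y\<in>A. delta x y * (F y :: complex)) = (if x \<in> A then F x else 0)"
proof -
  have "(\<Sum>y\<in>A. delta x y * F y) = (\<Sum>y\<in>A. if y = x then F y else 0)"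
    by (intro sum.cong refl) (auto simp: delta_def)
  also have "\<dots> = (if x \<in> A then F x else 0)" using assms by (simp add: sum.delta')
  finally show ?thesis .
qed

lemma sum_mult_if_eq:
  "finite A \<Longrightarrow> (\<Sum>y\<in>A. (f y :: complex) * (if a = y then 1 else 0)) = (if a \<in> A then f a else 0)"
  by (simp add: if_distrib[of "(*) _"] sum.delta cong: if_cong)

locale free_module_fibre = FI_category C for C :: "('o, 'm) cat" +
  fixes L :: "('o, 'm) freemod" and e :: 'o and \<sigma> :: 'm
  assumes L: "free_module C L" and e: "e \<in> Obj C" and \<sigma>: "\<sigma> \<in> Aut C e"
begin

abbreviation obj_at :: "nat \<Rightarrow> 'o" where "obj_at i \<equiv> fst (L ! i)"

abbreviation dim_at :: "nat \<Rightarrow> nat" where "dim_at i \<equiv> fst (snd (L ! i))"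

abbreviation rep_at :: "nat \<Rightarrow> 'm \<Rightarrow> nat \<Rightarrow> nat \<Rightarrow> complex" where "rep_at i \<equiv> snd (snd (L ! i))"

abbreviation coords :: "(nat \<times> 'm \<times> nat) set" where "coords \<equiv> fm_coords C L e"

abbreviation U :: "(nat \<times> 'm \<times> nat \<Rightarrow> complex) set" where "U \<equiv> fm_space C L e"

abbreviation K :: "(nat \<times> 'm \<times> nat \<Rightarrow> complex) set" where "K \<equiv> fm_relations C L e"

abbreviation T :: "(nat \<times> 'm \<times> nat \<Rightarrow> complex) \<Rightarrow> (nat \<times> 'm \<times> nat \<Rightarrow> complex)" where
  "T \<equiv> fm_act C L e \<sigma>"

lemma summand: "i < length L \<Longrightarrow> obj_at i \<in> Obj C \<and> is_rep C (obj_at i) (dim_at i) (rep_at i)"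
  using L unfolding free_module_def by (metis (no_types, lifting) case_prod_beta nth_mem)

lemma coords_mem: "(i, f, k) \<in> coords \<longleftrightarrow> i < length L \<and> f \<in> Hom C (obj_at i) e \<and> k < dim_at i"
  unfolding fm_coords_def by auto

lemma finite_coords: "finite coords"
proof -
  have "coords \<subseteq> (SIGMA i:{..<length L}. SIGMA f:(\<Union>j<length L. Hom C (obj_at j) e). {..<Max (dim_at ` {..<length L})})"
  proof
    fix x assume "x \<in> coords"
    then obtain i f k where x: "x = (i, f, k)" "i < length L" "f \<in> Hom C (obj_at i) e" "k < dim_at i"
      using coords_mem by (metis prod_cases3)
    have mx: "dim_at i \<le> Max (dim_at ` {..<length L})" using x by (intro Max_ge) auto
    show "x \<in> (SIGMA i:{..<length L}. SIGMA f:(\<Union>j<length L. Hom C (obj_at j) e). {..<Max (dim_at ` {..<length L})})"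
      using x less_le_trans[OF x(4) mx] by auto
  qed
  moreover have "finite (SIGMA i:{..<length L}. SIGMA f:(\<Union>j<length L. Hom C (obj_at j) e). {..<Max (dim_at ` {..<length L})})"
    using finite_Hom by (intro finite_SigmaI) auto
  ultimately show ?thesis by (rule finite_subset)
qed

lemma U_mem: "u \<in> U \<longleftrightarrow> (\<forall>x. u x \<noteq> 0 \<longrightarrow> x \<in> coords)"
  unfolding fm_space_def by auto

lemma subU: "cvs.subspace U"
  unfolding cvs.subspace_def
proof (intro conjI ballI allI)
  show "0 \<in> U" unfolding U_mem by simp
  show "x + y \<in> U" if "x \<in> U" "y \<in> U" for x y
    using that unfolding U_mem by (metis add.right_neutral plus_fun_apply)
  show "cscale c x \<in> U" if "x \<in> U" for x c
    using that unfolding U_mem by simp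
qed

lemma delta_U: "x \<in> coords \<Longrightarrow> delta x \<in> U"
  unfolding U_mem delta_def by auto

lemma U_expand: "u \<in> U \<Longrightarrow> u = (\<Sum>x\<in>coords. cscale (u x) (delta x))"
  unfolding U_mem by (auto simp: fun_eq_iff sum_fun_apply delta_def sum_mult_if_eq finite_coords)

lemma U_span: "U \<subseteq> cvs.span (delta ` coords)"
proof
  fix u assume u: "u \<in> U"
  show "u \<in> cvs.span (delta ` coords)"
    by (subst U_expand[OF u]) (intro cvs.span_sum cvs.span_scale cvs.span_base; auto)
qed

definition relators :: "(nat \<times> 'm \<times> nat \<Rightarrow> complex) set" where
  "relators = {delta (i, cmp C f g, k) - (\<Sum>j < dim_at i. cscale (rep_at i g j k) (delta (i, f, j)))
        | i f g k. i < length L \<and> f \<in> Hom C (obj_at i) e \<and> g \<in> Aut C (obj_at i) \<and> k < dim_at i}"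

lemma K_eq_span: "K = cvs.span relators"
  unfolding fm_relations_def relators_def by simp

lemma relator_in_K: "i < length L \<Longrightarrow> f \<in> Hom C (obj_at i) e \<Longrightarrow> g \<in> Aut C (obj_at i) \<Longrightarrow> k < dim_at i \<Longrightarrow>
   delta (i, cmp C f g, k) - (\<Sum>j < dim_at i. cscale (rep_at i g j k) (delta (i, f, j))) \<in> K"
  unfolding K_eq_span relators_def by (rule cvs.span_base) blast

lemma relators_U: "relators \<subseteq> U"
proof
  fix x assume "x \<in> relators"
  then obtain i f g k where x: "x = delta (i, cmp C f g, k) - (\<Sum>j < dim_at i. cscale (rep_at i g j k) (delta (i, f, j)))"
    and h: "i < length L" "f \<in> Hom C (obj_at i) e" "g \<in> Aut C (obj_at i)" "k < dim_at i"
    unfolding relators_def by blast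
  have "cmp C f g \<in> Hom C (obj_at i) e" using comp_hom Aut_Hom h by blast
  then show "x \<in> U" unfolding x using h
    by (intro cvs.subspace_diff[OF subU] cvs.subspace_sum[OF subU] cvs.subspace_scale[OF subU] delta_U)
       (auto simp: coords_mem)
qed

lemma subK: "cvs.subspace K" unfolding K_eq_span by simp

lemma KU: "K \<subseteq> U" unfolding K_eq_span by (rule cvs.span_minimal[OF relators_U subU])

lemma T_eq: "T u = (\<Sum>x\<in>coords. cscale (u x) (delta (fst x, cmp C \<sigma> (fst (snd x)), snd (snd x))))"
  unfolding fm_act_def by (intro sum.cong refl) auto

lemma Tadd: "T (u + v) = T u + T v"
  unfolding T_eq by (simp add: fun_eq_iff sum_fun_apply sum.distrib algebra_simps)

lemma Tscale: "T (cscale a u) = cscale a (T u)"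
  unfolding T_eq by (simp add: fun_eq_iff sum_fun_apply sum_distrib_left algebra_simps)

lemma Tdelta: "x \<in> coords \<Longrightarrow> T (delta x) = delta (fst x, cmp C \<sigma> (fst (snd x)), snd (snd x))"
  unfolding T_eq by (simp add: sum_delta_scale finite_coords)

lemma TU: "T u \<in> U"
  unfolding T_eq
  by (intro cvs.subspace_sum[OF subU] cvs.subspace_scale[OF subU] delta_U)
     (auto simp: coords_mem Aut_comp_Hom[OF \<sigma>])

lemma T0: "T 0 = 0" using Tscale[of 0 0] by (simp add: fun_eq_iff)

lemma Tsum: "T (sum f A) = (\<Sum>a\<in>A. T (f a))"
  by (rule additive_sum[where f=T]) (auto simp: Tadd T0)

lemma Tdiff: "T (u - v) = T u - T v"
proof -
  have "T (u - v) + T v = T u" using Tadd[of "u - v" v] by simp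
  then show ?thesis by (simp add: eq_diff_eq)
qed

lemma TK: "k \<in> K \<Longrightarrow> T k \<in> K"
  unfolding K_eq_span
proof (induct rule: cvs.span_induct)
  case base
  show ?case
    unfolding cvs.subspace_def using Tadd Tscale T0
    by (auto intro: cvs.span_add cvs.span_scale cvs.span_zero)
next
  case (step x)
  then obtain i f g k where x: "x = delta (i, cmp C f g, k) - (\<Sum>j < dim_at i. cscale (rep_at i g j k) (delta (i, f, j)))"
    and h: "i < length L" "f \<in> Hom C (obj_at i) e" "g \<in> Aut C (obj_at i)" "k < dim_at i"
    unfolding relators_def by blast
  have fg: "cmp C f g \<in> Hom C (obj_at i) e" using comp_hom Aut_Hom h by blast
  have "T x = delta (i, cmp C \<sigma> (cmp C f g), k) - (\<Sum>j < dim_at i. cscale (rep_at i g j k) (delta (i, cmp C \<sigma> f, j)))"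
    unfolding x Tdiff Tsum Tscale using h fg by (simp add: Tdelta coords_mem)
  also have "cmp C \<sigma> (cmp C f g) = cmp C (cmp C \<sigma> f) g"
    using comp_assoc[of g "obj_at i" "obj_at i" f e \<sigma> e] h Aut_Hom \<sigma> by auto
  finally have "T x = delta (i, cmp C (cmp C \<sigma> f) g, k) - (\<Sum>j < dim_at i. cscale (rep_at i g j k) (delta (i, cmp C \<sigma> f, j)))" .
  moreover have "delta (i, cmp C (cmp C \<sigma> f) g, k) - (\<Sum>j < dim_at i. cscale (rep_at i g j k) (delta (i, cmp C \<sigma> f, j))) \<in> cvs.span relators"
    using relator_in_K[of i "cmp C \<sigma> f" g k] h Aut_comp_Hom[OF \<sigma>] unfolding K_eq_span by blast
  ultimately show ?case by (simp only:)
qed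

text \<open>Modulo the relations, \<open>f \<otimes> v\<^sub>k\<close> with \<open>f = r g\<close>, \<open>r = orb_rep f\<close>, equals
  \<open>r \<otimes> \<rho>(g) v\<^sub>k\<close>; so the vectors \<open>r \<otimes> v\<^sub>k'\<close> indexed by \<open>basis_idx\<close> represent a basis of the
  quotient, and \<open>dual x\<close> is the coordinate functional of the basis vector \<open>x\<close>.\<close>
definition proj :: "(nat \<times> 'm \<times> nat) \<Rightarrow> (nat \<times> 'm \<times> nat) \<Rightarrow> complex" where
  "proj x y = (if fst y = fst x \<and> orb_rep (obj_at (fst x)) (fst (snd y)) = fst (snd x)
            then rep_at (fst x) (orb_aut (obj_at (fst x)) (fst (snd y))) (snd (snd x)) (snd (snd y)) else 0)"

definition dual :: "nat \<times> 'm \<times> nat \<Rightarrow> (nat \<times> 'm \<times> nat \<Rightarrow> complex) \<Rightarrow> complex" where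
  "dual x u = (\<Sum>y\<in>coords. u y * proj x y)"

definition basis_idx :: "(nat \<times> 'm \<times> nat) set" where
  "basis_idx = (SIGMA i:{..<length L}. SIGMA r:orb_reps (obj_at i) e. {..<dim_at i})"

lemma finite_basis_idx: "finite basis_idx" unfolding basis_idx_def using finite_orb_reps by (intro finite_SigmaI) auto

lemma basis_idx_mem: "(i, r, k) \<in> basis_idx \<longleftrightarrow> i < length L \<and> r \<in> Hom C (obj_at i) e \<and> orb_rep (obj_at i) r = r \<and> k < dim_at i"
  unfolding basis_idx_def orb_reps_def by auto

lemma dual_add: "dual x (u + v) = dual x u + dual x v"
  unfolding dual_def by (simp add: sum.distrib algebra_simps)

lemma dual_scale: "dual x (cscale a u) = a * dual x u"
  unfolding dual_def by (simp add: sum_distrib_left algebra_simps)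

lemma dual_delta: "y \<in> coords \<Longrightarrow> dual x (delta y) = proj x y"
  unfolding dual_def by (simp add: sum_delta_mult finite_coords)

lemma dual_zero: "dual x 0 = 0" unfolding dual_def by simp

lemma dual_sum: "dual x (sum f A) = (\<Sum>a\<in>A. dual x (f a))"
  by (rule additive_sum[where f="dual x"]) (auto simp: dual_add dual_zero)

lemma dual_diff: "dual x (u - v) = dual x u - dual x v"
  unfolding dual_def by (simp add: sum_subtractf algebra_simps)

lemma delta_basis_U: "x \<in> basis_idx \<Longrightarrow> delta x \<in> U"
  by (cases x) (auto simp: basis_idx_mem coords_mem intro!: delta_U)

lemma rep_mult: "i < length L \<Longrightarrow> g \<in> Aut C (obj_at i) \<Longrightarrow> h \<in> Aut C (obj_at i) \<Longrightarrow> a < dim_at i \<Longrightarrow> b < dim_at i \<Longrightarrow>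
   rep_at i (cmp C g h) a b = (\<Sum>k<dim_at i. rep_at i g a k * rep_at i h k b)"
  using summand unfolding is_rep_def by blast

lemma dual_K: assumes x: "x \<in> basis_idx" and k: "k \<in> K" shows "dual x k = 0"
  using k unfolding K_eq_span
proof (induct rule: cvs.span_induct)
  case base
  show ?case unfolding cvs.subspace_def using dual_add dual_scale dual_zero by auto
next
  case (step z)
  then obtain i f g k where z: "z = delta (i, cmp C f g, k) - (\<Sum>j < dim_at i. cscale (rep_at i g j k) (delta (i, f, j)))"
    and h: "i < length L" "f \<in> Hom C (obj_at i) e" "g \<in> Aut C (obj_at i)" "k < dim_at i"
    unfolding relators_def by blast
  obtain i0 r k0 where x0: "x = (i0, r, k0)" by (metis prod_cases3)
  have fg: "cmp C f g \<in> Hom C (obj_at i) e" using comp_hom Aut_Hom h by blast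
  have "dual x z = proj x (i, cmp C f g, k) - (\<Sum>j < dim_at i. rep_at i g j k * proj x (i, f, j))"
    unfolding z dual_diff dual_sum dual_scale using h fg by (simp add: dual_delta coords_mem)
  also have "\<dots> = 0"
  proof (cases "i = i0 \<and> orb_rep (obj_at i) f = r")
    case True
    have k0: "k0 < dim_at i" using x x0 True basis_idx_mem by auto
    have "proj x (i, cmp C f g, k) = rep_at i (cmp C (orb_aut (obj_at i) f) g) k0 k"
      using True x0 orb_rep_comp[OF h(2,3)] orb_aut_comp[OF h(2,3)] unfolding proj_def by auto
    also have "\<dots> = (\<Sum>j<dim_at i. rep_at i (orb_aut (obj_at i) f) k0 j * rep_at i g j k)"
      using rep_mult[OF h(1) orb_aut(1)[OF h(2)] h(3) k0 h(4)] .
    also have "\<dots> = (\<Sum>j < dim_at i. rep_at i g j k * proj x (i, f, j))"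
      using True x0 unfolding proj_def by (intro sum.cong refl) auto
    finally show ?thesis by simp
  next
    case False
    then have "proj x (i, cmp C f g, k) = 0" "\<And>j. proj x (i, f, j) = 0"
      using x0 orb_rep_comp[OF h(2,3)] unfolding proj_def by auto
    then show ?thesis by simp
  qed
  finally show ?case .
qed

lemma delta_decomp_K: assumes y: "y \<in> coords" shows "delta y - (\<Sum>x\<in>basis_idx. cscale (dual x (delta y)) (delta x)) \<in> K"
proof -
  obtain i f j where y0: "y = (i, f, j)" by (metis prod_cases3)
  have h: "i < length L" "f \<in> Hom C (obj_at i) e" "j < dim_at i" using y y0 coords_mem by auto
  let ?r = "orb_rep (obj_at i) f"
  have rR: "?r \<in> Hom C (obj_at i) e" "orb_rep (obj_at i) ?r = ?r" using orb_rep_Hom[OF h(2)] orb_rep_idem[OF h(2)] by auto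
  have "(\<Sum>x\<in>basis_idx. cscale (dual x (delta y)) (delta x)) = (\<Sum>x\<in>basis_idx. cscale (proj x y) (delta x))"
    using y by (simp add: dual_delta)
  also have "\<dots> = (\<Sum>x\<in>(\<lambda>k. (i, ?r, k)) ` {..<dim_at i}. cscale (proj x y) (delta x))"
  proof (rule sum.mono_neutral_cong_right[OF finite_basis_idx])
    show "(\<lambda>k. (i, ?r, k)) ` {..<dim_at i} \<subseteq> basis_idx" using h rR by (auto simp: basis_idx_mem)
    show "\<forall>x\<in>basis_idx - (\<lambda>k. (i, ?r, k)) ` {..<dim_at i}. cscale (proj x y) (delta x) = 0"
    proof
      fix x assume xx: "x \<in> basis_idx - (\<lambda>k. (i, ?r, k)) ` {..<dim_at i}"
      obtain i' r' k' where x0: "x = (i', r', k')" by (metis prod_cases3)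
      have "proj x y = 0"
      proof (rule ccontr)
        assume "proj x y \<noteq> 0"
        then have "i' = i" "r' = ?r" using x0 y0 unfolding proj_def by (auto split: if_splits)
        then show False using xx x0 basis_idx_mem by auto
      qed
      then show "cscale (proj x y) (delta x) = 0" by (simp add: fun_eq_iff)
    qed
  qed auto
  also have "\<dots> = (\<Sum>k<dim_at i. cscale (proj (i, ?r, k) y) (delta (i, ?r, k)))"
    by (subst sum.reindex) (auto simp: inj_on_def)
  also have "\<dots> = (\<Sum>k<dim_at i. cscale (rep_at i (orb_aut (obj_at i) f) k j) (delta (i, ?r, k)))"
    using y0 unfolding proj_def by simp
  finally have eq: "(\<Sum>x\<in>basis_idx. cscale (dual x (delta y)) (delta x)) = (\<Sum>k<dim_at i. cscale (rep_at i (orb_aut (obj_at i) f) k j) (delta (i, ?r, k)))" .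
  have "delta (i, cmp C ?r (orb_aut (obj_at i) f), j) - (\<Sum>k<dim_at i. cscale (rep_at i (orb_aut (obj_at i) f) k j) (delta (i, ?r, k))) \<in> K"
    by (rule relator_in_K) (use h rR orb_aut[OF h(2)] in auto)
  then show ?thesis using eq y0 orb_aut(2)[OF h(2)] by (simp only:)
qed

lemma decomp: assumes u: "u \<in> U" shows "u - (\<Sum>x\<in>basis_idx. cscale (dual x u) (delta x)) \<in> K"
proof -
  define D where "D y = delta y - (\<Sum>x\<in>basis_idx. cscale (dual x (delta y)) (delta x))" for y
  have "(\<Sum>y\<in>coords. cscale (u y) (D y)) \<in> K"
    using delta_decomp_K unfolding D_def by (intro cvs.subspace_sum[OF subK] cvs.subspace_scale[OF subK]) auto
  moreover have "(\<Sum>y\<in>coords. cscale (u y) (D y)) = u - (\<Sum>x\<in>basis_idx. cscale (dual x u) (delta x))"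
  proof -
    have pu: "dual x u = (\<Sum>y\<in>coords. u y * dual x (delta y))" for x
      unfolding dual_def[of x u] by (intro sum.cong refl) (simp add: dual_delta)
    have "u = (\<Sum>y\<in>coords. cscale (u y) (delta y))" by (rule U_expand[OF u])
    then show ?thesis
      unfolding D_def pu
      by (simp add: fun_eq_iff sum_fun_apply sum_distrib_left sum_distrib_right sum_subtractf
          algebra_simps sum.swap[of _ basis_idx] cong: sum.cong)
  qed
  ultimately show ?thesis by simp
qed

lemma chi_free_formula:
  "chi_free C L e \<sigma> = (\<Sum>i<length L. \<Sum>r\<in>orb_reps (obj_at i) e.
      if orb_rep (obj_at i) (cmp C \<sigma> r) = r then rep_char (dim_at i) (rep_at i) (orb_aut (obj_at i) (cmp C \<sigma> r)) else 0)"
proof -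
  have "chi_free C L e \<sigma> = quot_trace U K T" unfolding chi_free_def using e \<sigma> by simp
  also have "\<dots> = (\<Sum>x\<in>basis_idx. dual x (T (delta x)))"
  proof (rule quot_trace_eq[OF subU subK KU _ U_span TU TK Tadd Tscale finite_basis_idx delta_basis_U dual_add dual_scale dual_K decomp])
    show "finite (delta ` coords)" using finite_coords by simp
  qed
  also have "\<dots> = (\<Sum>(i, r, k)\<in>basis_idx. if orb_rep (obj_at i) (cmp C \<sigma> r) = r then rep_at i (orb_aut (obj_at i) (cmp C \<sigma> r)) k k else 0)"
  proof (intro sum.cong refl)
    fix x assume x: "x \<in> basis_idx"
    obtain i r k where x0: "x = (i, r, k)" by (metis prod_cases3)
    have h: "i < length L" "r \<in> Hom C (obj_at i) e" "k < dim_at i" using x x0 basis_idx_mem by auto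
    have "T (delta x) = delta (i, cmp C \<sigma> r, k)" using Tdelta[of x] x0 h by (simp add: coords_mem)
    then have "dual x (T (delta x)) = proj x (i, cmp C \<sigma> r, k)"
      using dual_delta h Aut_comp_Hom[OF \<sigma>] by (simp add: coords_mem)
    then show "dual x (T (delta x)) = (case x of (i, r, k) \<Rightarrow> if orb_rep (obj_at i) (cmp C \<sigma> r) = r then rep_at i (orb_aut (obj_at i) (cmp C \<sigma> r)) k k else 0)"
      using x0 unfolding proj_def by simp
  qed
  also have "\<dots> = (\<Sum>i<length L. \<Sum>r\<in>orb_reps (obj_at i) e.
      if orb_rep (obj_at i) (cmp C \<sigma> r) = r then rep_char (dim_at i) (rep_at i) (orb_aut (obj_at i) (cmp C \<sigma> r)) else 0)"
    unfolding basis_idx_def rep_char_def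
    by (simp add: sum.Sigma[symmetric] finite_orb_reps) (intro sum.cong refl, auto)
  finally show ?thesis .
qed

end

section \<open>Characters of free modules are character polynomials\<close>

lemma cp_fun_out: "\<not> (e \<in> Obj C \<and> \<sigma> \<in> Aut C e) \<Longrightarrow> cp_fun C P e \<sigma> = 0"
  unfolding cp_fun_def by auto

lemma chi_free_out: "\<not> (e \<in> Obj C \<and> \<sigma> \<in> Aut C e) \<Longrightarrow> chi_free C L e \<sigma> = 0"
  unfolding chi_free_def by auto

lemma cp_fun_concat: "cp_fun C (concat Ps) e \<sigma> = (\<Sum>P\<leftarrow>Ps. cp_fun C P e \<sigma>)"
  unfolding cp_fun_def by (induct Ps) auto

lemma chi_virtual_concat: "chi_virtual C (concat Vs) e \<sigma> = (\<Sum>V\<leftarrow>Vs. chi_virtual C V e \<sigma>)"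
  unfolding chi_virtual_def by (induct Vs) auto

lemma chi_virtual_scale: "chi_virtual C (map (\<lambda>(b, y). (a * b, y)) V) e \<sigma> = a * chi_virtual C V e \<sigma>"
  unfolding chi_virtual_def by (induct V) (auto simp: algebra_simps)

lemma cp_fun_scale: "cp_fun C (map (\<lambda>(b, y). (a * b, y)) P) e \<sigma> = a * cp_fun C P e \<sigma>"
  unfolding cp_fun_def by (induct P) (auto simp: algebra_simps)

context FI_category
begin

lemma orb_rep_twisted_fixed:
  assumes \<sigma>: "\<sigma> \<in> Aut C e" and f: "f \<in> Hom C c e" and \<psi>A: "\<psi> \<in> Aut C c"
    and eq: "cmp C \<sigma> f = cmp C f \<psi>"
  shows "orb_rep c (cmp C \<sigma> (orb_rep c f)) = orb_rep c f \<and> conj_to c (orb_aut c (cmp C \<sigma> (orb_rep c f))) \<psi>"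
proof -
  define r where "r = orb_rep c f"
  define g where "g = orb_aut c f"
  have rH: "r \<in> Hom C c e" using orb_rep_Hom[OF f] r_def by simp
  have gA: "g \<in> Aut C c" and frg: "cmp C r g = f" using orb_aut[OF f] unfolding r_def g_def by auto
  note iv = aut_inv[OF gA]
  have r_eq: "cmp C f (aut_inv c g) = r"
    using hom_aut_assoc[OF rH gA iv(1)] frg iv(3) id_right[OF rH] by simp
  define h where "h = cmp C g (cmp C \<psi> (aut_inv c g))"
  have hA: "h \<in> Aut C c" unfolding h_def using comp_Aut gA \<psi>A iv(1) by blast
  have "cmp C \<sigma> r = cmp C \<sigma> (cmp C f (aut_inv c g))" using r_eq by simp
  also have "\<dots> = cmp C (cmp C f \<psi>) (aut_inv c g)" using aut_hom_aut_assoc[OF \<sigma> f iv(1)] eq by simp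
  also have "\<dots> = cmp C f (cmp C \<psi> (aut_inv c g))" using hom_aut_assoc[OF f \<psi>A iv(1)] by simp
  also have "\<dots> = cmp C r h" unfolding h_def using hom_aut_assoc[OF rH gA comp_Aut[OF \<psi>A iv(1)]] frg by simp
  finally have sr: "cmp C \<sigma> r = cmp C r h" .
  have "orb_rep c (cmp C \<sigma> r) = orb_rep c r" unfolding sr using orb_rep_comp[OF rH hA] .
  then have rps: "orb_rep c (cmp C \<sigma> r) = r" using orb_rep_idem[OF f] unfolding r_def by simp
  have "orb_aut c (cmp C \<sigma> r) = h"
    by (rule orb_aut_unique[OF Aut_comp_Hom[OF \<sigma> rH] hA]) (subst rps, rule sr[symmetric])
  moreover have "cmp C h g = cmp C g \<psi>"
  proof -
    have "cmp C h g = cmp C g (cmp C (cmp C \<psi> (aut_inv c g)) g)"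
      unfolding h_def using aut_assoc[OF gA comp_Aut[OF \<psi>A iv(1)] gA] by simp
    also have "cmp C (cmp C \<psi> (aut_inv c g)) g = \<psi>"
      using aut_assoc[OF \<psi>A iv(1) gA, symmetric] iv(2) aut_id_right[OF \<psi>A] by simp
    finally show ?thesis .
  qed
  ultimately show ?thesis using rps gA unfolding conj_to_def r_def by metis
qed

lemma binomX_eq_card_orb_reps:
  assumes s0: "s0 \<in> Aut C c" and \<sigma>: "\<sigma> \<in> Aut C e"
  shows "binomX C c (conj_cls c s0) e \<sigma> =
         card {r\<in>orb_reps c e. orb_rep c (cmp C \<sigma> r) = r \<and> orb_aut c (cmp C \<sigma> r) \<in> conj_cls c s0}"
proof -
  let ?\<mu> = "conj_cls c s0"
  define R where "R = {r\<in>orb_reps c e. orb_rep c (cmp C \<sigma> r) = r \<and> orb_aut c (cmp C \<sigma> r) \<in> ?\<mu>}"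
  have S: "{orbit_cls C c f | f. f \<in> Hom C c e \<and> (\<exists>\<psi>\<in>?\<mu>. cmp C \<sigma> f = cmp C f \<psi>)} = Orb c ` R"
  proof
    show "Orb c ` R \<subseteq> {orbit_cls C c f | f. f \<in> Hom C c e \<and> (\<exists>\<psi>\<in>?\<mu>. cmp C \<sigma> f = cmp C f \<psi>)}"
    proof
      fix x assume "x \<in> Orb c ` R"
      then obtain r where r: "r \<in> R" "x = Orb c r" by auto
      have rh: "r \<in> Hom C c e" "orb_rep c (cmp C \<sigma> r) = r" "orb_aut c (cmp C \<sigma> r) \<in> ?\<mu>"
        using r unfolding R_def orb_reps_def by auto
      have "cmp C \<sigma> r = cmp C r (orb_aut c (cmp C \<sigma> r))"
        using orb_aut(2)[OF Aut_comp_Hom[OF \<sigma> rh(1)]] rh(2) by simp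
      then show "x \<in> {orbit_cls C c f | f. f \<in> Hom C c e \<and> (\<exists>\<psi>\<in>?\<mu>. cmp C \<sigma> f = cmp C f \<psi>)}"
        using r rh by blast
    qed
  next
    show "{orbit_cls C c f | f. f \<in> Hom C c e \<and> (\<exists>\<psi>\<in>?\<mu>. cmp C \<sigma> f = cmp C f \<psi>)} \<subseteq> Orb c ` R"
    proof
      fix x assume "x \<in> {orbit_cls C c f | f. f \<in> Hom C c e \<and> (\<exists>\<psi>\<in>?\<mu>. cmp C \<sigma> f = cmp C f \<psi>)}"
      then obtain f \<psi> where x: "x = Orb c f" and f: "f \<in> Hom C c e" and \<psi>: "\<psi> \<in> ?\<mu>"
        and eq: "cmp C \<sigma> f = cmp C f \<psi>" by blast
      have \<psi>A: "\<psi> \<in> Aut C c" using \<psi> conj_cls_subset by auto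
      define r where "r = orb_rep c f"
      have "orb_rep c (cmp C \<sigma> r) = r" "conj_to c (orb_aut c (cmp C \<sigma> r)) \<psi>"
        using orb_rep_twisted_fixed[OF \<sigma> f \<psi>A eq] unfolding r_def by auto
      moreover have "orb_aut c (cmp C \<sigma> r) \<in> Aut C c"
        using orb_aut(1)[OF Aut_comp_Hom[OF \<sigma> orb_rep_Hom[OF f]]] unfolding r_def .
      ultimately have "r \<in> R"
        unfolding R_def orb_reps_def r_def
        using orb_rep_Hom[OF f] orb_rep_idem[OF f] conj_cls_closed[OF s0 \<psi>] by auto
      moreover have "x = Orb c r" unfolding x r_def using orbit_orb_rep[OF f] by simp
      ultimately show "x \<in> Orb c ` R" by blast
    qed
  qed
  have inj: "inj_on (Orb c) R"
  proof
    fix r r' assume "r \<in> R" "r' \<in> R" "Orb c r = Orb c r'"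
    then have "orb_rep c r = orb_rep c r'" "orb_rep c r = r" "orb_rep c r' = r'" unfolding orb_rep_def R_def orb_reps_def by auto
    then show "r = r'" by simp
  qed
  have "binomX C c ?\<mu> e \<sigma> = card (Orb c ` R)" unfolding binomX_def S ..
  also have "\<dots> = card R" by (rule card_image[OF inj])
  finally show ?thesis unfolding R_def .
qed

lemma orb_reps_sum_eq_class_sum:
  fixes \<chi> :: "'m \<Rightarrow> complex"
  assumes \<sigma>: "\<sigma> \<in> Aut C e"
    and cf: "\<And>a b. a \<in> Aut C c \<Longrightarrow> b \<in> Aut C c \<Longrightarrow> conj_to c a b \<Longrightarrow> \<chi> a = \<chi> b"
  shows "(\<Sum>r\<in>orb_reps c e. if orb_rep c (cmp C \<sigma> r) = r then \<chi> (orb_aut c (cmp C \<sigma> r)) else 0)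
       = (\<Sum>\<mu>\<in>conj_classes c. \<chi> (cls_rep \<mu>) * of_nat (binomX C c \<mu> e \<sigma>))"
proof -
  have bx: "of_nat (binomX C c \<mu> e \<sigma>) = (\<Sum>r\<in>orb_reps c e. if orb_rep c (cmp C \<sigma> r) = r \<and> orb_aut c (cmp C \<sigma> r) \<in> \<mu> then 1 else (0::complex))"
    if "\<mu> \<in> conj_classes c" for \<mu>
  proof -
    have "conj_class C c \<mu>" using that by (simp add: conj_classes_def)
    then obtain s0 where s0: "s0 \<in> Aut C c" "\<mu> = conj_cls c s0" unfolding conj_class_iff by blast
    show ?thesis unfolding s0(2) binomX_eq_card_orb_reps[OF s0(1) \<sigma>] using finite_orb_reps
      by (simp add: sum.If_cases Int_def)
  qed
  have "(\<Sum>\<mu>\<in>conj_classes c. \<chi> (cls_rep \<mu>) * of_nat (binomX C c \<mu> e \<sigma>))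
     = (\<Sum>\<mu>\<in>conj_classes c. \<Sum>r\<in>orb_reps c e. if orb_rep c (cmp C \<sigma> r) = r \<and> orb_aut c (cmp C \<sigma> r) \<in> \<mu> then \<chi> (cls_rep \<mu>) else 0)"
  proof (intro sum.cong refl)
    fix \<mu> assume m: "\<mu> \<in> conj_classes c"
    show "\<chi> (cls_rep \<mu>) * of_nat (binomX C c \<mu> e \<sigma>) = (\<Sum>r\<in>orb_reps c e. if orb_rep c (cmp C \<sigma> r) = r \<and> orb_aut c (cmp C \<sigma> r) \<in> \<mu> then \<chi> (cls_rep \<mu>) else 0)"
      by (simp only: bx[OF m] sum_distrib_left) (intro sum.cong refl, simp)
  qed
  also have "\<dots> = (\<Sum>r\<in>orb_reps c e. \<Sum>\<mu>\<in>conj_classes c. if orb_rep c (cmp C \<sigma> r) = r \<and> orb_aut c (cmp C \<sigma> r) \<in> \<mu> then \<chi> (cls_rep \<mu>) else 0)"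
    by (rule sum.swap)
  also have "\<dots> = (\<Sum>r\<in>orb_reps c e. if orb_rep c (cmp C \<sigma> r) = r then \<chi> (orb_aut c (cmp C \<sigma> r)) else 0)"
  proof (intro sum.cong refl)
    fix r assume r: "r \<in> orb_reps c e"
    show "(\<Sum>\<mu>\<in>conj_classes c. if orb_rep c (cmp C \<sigma> r) = r \<and> orb_aut c (cmp C \<sigma> r) \<in> \<mu> then \<chi> (cls_rep \<mu>) else 0) =
          (if orb_rep c (cmp C \<sigma> r) = r then \<chi> (orb_aut c (cmp C \<sigma> r)) else 0)"
    proof (cases "orb_rep c (cmp C \<sigma> r) = r")
      case True
      let ?a = "orb_aut c (cmp C \<sigma> r)"
      have rH: "r \<in> Hom C c e" using r unfolding orb_reps_def by auto
      have aA: "?a \<in> Aut C c" using orb_aut(1)[OF Aut_comp_Hom[OF \<sigma> rH]] .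
      have "(\<Sum>\<mu>\<in>conj_classes c. if ?a \<in> \<mu> then \<chi> (cls_rep \<mu>) else 0) = (\<Sum>\<mu>\<in>{\<mu>\<in>conj_classes c. ?a \<in> \<mu>}. \<chi> (cls_rep \<mu>))"
        using finite_conj_classes by (simp add: sum.inter_filter)
      also have "\<dots> = \<chi> (cls_rep (conj_cls c ?a))" unfolding conj_classes_containing[OF aA] by simp
      also have "\<dots> = \<chi> ?a"
      proof -
        have cl: "conj_cls c ?a \<in> conj_classes c" using conj_classes_containing[OF aA] by auto
        have p: "cls_rep (conj_cls c ?a) \<in> conj_cls c ?a" using cls_rep[OF cl] .
        then show ?thesis using cf[of "cls_rep (conj_cls c ?a)" ?a] aA unfolding conj_cls_def by auto
      qed
      finally show ?thesis using True by simp
    qed simp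
  qed
  finally show ?thesis by simp
qed

lemma chi_free_class_sum:
  assumes L: "free_module C L" and e: "e \<in> Obj C" and \<sigma>: "\<sigma> \<in> Aut C e"
  shows "chi_free C L e \<sigma> = (\<Sum>i<length L. \<Sum>\<mu>\<in>conj_classes (fst (L ! i)).
            rep_char (fst (snd (L ! i))) (snd (snd (L ! i))) (cls_rep \<mu>) * of_nat (binomX C (fst (L ! i)) \<mu> e \<sigma>))"
proof -
  interpret free_module_fibre C L e \<sigma> using L e \<sigma> by unfold_locales auto
  show ?thesis unfolding chi_free_formula
  proof (intro sum.cong refl)
    fix i assume i: "i \<in> {..<length L}"
    show "(\<Sum>r\<in>orb_reps (obj_at i) e. if orb_rep (obj_at i) (cmp C \<sigma> r) = r then rep_char (dim_at i) (rep_at i) (orb_aut (obj_at i) (cmp C \<sigma> r)) else 0) =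
          (\<Sum>\<mu>\<in>conj_classes (obj_at i). rep_char (dim_at i) (rep_at i) (cls_rep \<mu>) * of_nat (binomX C (obj_at i) \<mu> e \<sigma>))"
      using summand[of i] i by (intro orb_reps_sum_eq_class_sum[OF \<sigma>] rep_char_conj) auto
  qed
qed

lemma chi_free_single:
  assumes c: "c \<in> Obj C" and rep: "is_rep C c n \<rho>" and e: "e \<in> Obj C" and \<sigma>: "\<sigma> \<in> Aut C e"
  shows "chi_free C [(c, n, \<rho>)] e \<sigma> =
     (\<Sum>r\<in>orb_reps c e. if orb_rep c (cmp C \<sigma> r) = r then rep_char n \<rho> (orb_aut c (cmp C \<sigma> r)) else 0)"
proof -
  interpret free_module_fibre C "[(c, n, \<rho>)]" e \<sigma> using c rep e \<sigma> by unfold_locales (auto simp: free_module_def)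
  have s1: "\<And>F::nat\<Rightarrow>complex. (\<Sum>i<length [(c, n, \<rho>)]. F i) = F 0" by simp
  show ?thesis unfolding chi_free_formula s1 by (simp cong: if_cong)
qed

definition conj_class_list :: "'o \<Rightarrow> 'm set list" where
  "conj_class_list c = (SOME xs. set xs = conj_classes c \<and> distinct xs)"

lemma conj_class_list: "set (conj_class_list c) = conj_classes c" "distinct (conj_class_list c)"
  unfolding conj_class_list_def using someI_ex[OF finite_distinct_list[OF finite_conj_classes]] by auto

definition ind_cp :: "'o \<Rightarrow> nat \<Rightarrow> ('m \<Rightarrow> nat \<Rightarrow> nat \<Rightarrow> complex) \<Rightarrow> ('o, 'm) charpoly" where
  "ind_cp c n \<rho> = map (\<lambda>\<mu>. (rep_char n \<rho> (cls_rep \<mu>), c, \<mu>)) (conj_class_list c)"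

lemma char_poly_ind_cp: "char_poly C (ind_cp c n \<rho>)" if "c \<in> Obj C"
  using that conj_class_list unfolding char_poly_def ind_cp_def conj_classes_def by auto

lemma cp_fun_ind_cp: "e \<in> Obj C \<Longrightarrow> \<sigma> \<in> Aut C e \<Longrightarrow>
  cp_fun C (ind_cp c n \<rho>) e \<sigma> = (\<Sum>\<mu>\<in>conj_classes c. rep_char n \<rho> (cls_rep \<mu>) * of_nat (binomX C c \<mu> e \<sigma>))"
  unfolding cp_fun_def ind_cp_def
  by (simp add: comp_def sum_list_distinct_conv_sum_set[OF conj_class_list(2), unfolded conj_class_list(1)])

lemma chi_free_eq_cp_fun:
  assumes L: "free_module C L"
  shows "chi_free C L = cp_fun C (concat (map (\<lambda>(c, n, \<rho>). ind_cp c n \<rho>) L))"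
proof (intro ext)
  fix e \<sigma>
  show "chi_free C L e \<sigma> = cp_fun C (concat (map (\<lambda>(c, n, \<rho>). ind_cp c n \<rho>) L)) e \<sigma>"
  proof (cases "e \<in> Obj C \<and> \<sigma> \<in> Aut C e")
    case True
    have "cp_fun C (concat (map (\<lambda>(c, n, \<rho>). ind_cp c n \<rho>) L)) e \<sigma>
        = (\<Sum>x\<leftarrow>L. cp_fun C (ind_cp (fst x) (fst (snd x)) (snd (snd x))) e \<sigma>)"
      unfolding cp_fun_concat by (simp add: comp_def case_prod_beta)
    also have "\<dots> = (\<Sum>i<length L. cp_fun C (ind_cp (fst (L!i)) (fst (snd (L!i))) (snd (snd (L!i)))) e \<sigma>)"
      by (simp add: sum_list_sum_nth atLeast0LessThan)
    also have "\<dots> = chi_free C L e \<sigma>"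
      unfolding chi_free_class_sum[OF L conjunct1[OF True] conjunct2[OF True]] using True by (simp add: cp_fun_ind_cp)
    finally show ?thesis by simp
  qed (simp add: cp_fun_out chi_free_out)
qed

lemma char_poly_free_cp: "free_module C L \<Longrightarrow> char_poly C (concat (map (\<lambda>(c, n, \<rho>). ind_cp c n \<rho>) L))"
  unfolding free_module_def char_poly_def using char_poly_ind_cp unfolding char_poly_def by fastforce

end

section \<open>Binomial class functions are virtual characters\<close>

lemma sum_list_sum_swap:
  "(\<Sum>x\<leftarrow>W. (\<Sum>r\<in>R. h x r)) = (\<Sum>r\<in>R. (\<Sum>x\<leftarrow>W. h x r :: complex))"
  by (induct W) (auto simp: sum.distrib)

context FI_category
begin

lemma class_indicator_rep_chars:
  assumes s: "s \<in> Aut C c"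
  obtains W :: "(complex \<times> nat \<times> ('m \<Rightarrow> nat \<Rightarrow> nat \<Rightarrow> complex)) list"
  where "\<forall>(a, n, \<rho>) \<in> set W. is_rep C c n \<rho>"
    and "\<forall>g\<in>Aut C c. (\<Sum>(a, n, \<rho>) \<leftarrow> W. a * rep_char n \<rho> g) = (if g \<in> conj_cls c s then 1 else 0)"
proof -
  have c: "c \<in> Obj C" using Aut_Obj s by blast
  interpret ci: cyclic_induction "aut_group c" s
    by (rule cyclic_induction.intro[OF group_aut_group[OF c]])
       (unfold_locales, auto simp: aut_group_def finite_Aut s)
  let ?m = "group.ord (aut_group c) s"
  let ?W = "map (\<lambda>t. (ci.ind_coeff t, ci.N, ci.ind_rep t)) [0..<?m]"
  show ?thesis
  proof
    show "\<forall>(a, n, \<rho>) \<in> set ?W. is_rep C c n \<rho>"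
      using ci.ind_rep_one ci.ind_rep_mult unfolding is_rep_def by (auto simp: aut_group_def)
    show "\<forall>g\<in>Aut C c. (\<Sum>(a, n, \<rho>) \<leftarrow> ?W. a * rep_char n \<rho> g) = (if g \<in> conj_cls c s then 1 else 0)"
    proof
      fix g assume g: "g \<in> Aut C c"
      have "(\<Sum>(a, n, \<rho>) \<leftarrow> ?W. a * rep_char n \<rho> g) = (\<Sum>t<?m. ci.ind_coeff t * rep_char ci.N (ci.ind_rep t) g)"
        by (simp add: comp_def interv_sum_list_conv_sum_set_nat atLeast0LessThan)
      also have "\<dots> = (if g \<in> conj_cls c s then 1 else 0)"
        using ci.class_indicator_eq_sum[of g] g unfolding conj_cls_def conj_to_def by (simp add: aut_group_def)
      finally show "(\<Sum>(a, n, \<rho>) \<leftarrow> ?W. a * rep_char n \<rho> g) = (if g \<in> conj_cls c s then 1 else 0)" .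
    qed
  qed
qed

lemma chi_virtual_at_one_object:
  assumes W: "\<forall>(a, n, \<rho>) \<in> set W. is_rep C c n \<rho>"
    and c: "c \<in> Obj C" and e: "e \<in> Obj C" and \<sigma>: "\<sigma> \<in> Aut C e"
  shows "chi_virtual C (map (\<lambda>(a, n, \<rho>). (a, c, n, \<rho>)) W) e \<sigma> =
    (\<Sum>r\<in>orb_reps c e. if orb_rep c (cmp C \<sigma> r) = r
                        then (\<Sum>(a, n, \<rho>) \<leftarrow> W. a * rep_char n \<rho> (orb_aut c (cmp C \<sigma> r))) else 0)"
proof -
  have "chi_virtual C (map (\<lambda>(a, n, \<rho>). (a, c, n, \<rho>)) W) e \<sigma>
      = (\<Sum>(a, n, \<rho>) \<leftarrow> W. a * (\<Sum>r\<in>orb_reps c e.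
           if orb_rep c (cmp C \<sigma> r) = r then rep_char n \<rho> (orb_aut c (cmp C \<sigma> r)) else 0))"
    using W by (induct W) (auto simp: chi_virtual_def chi_free_single[OF c _ e \<sigma>])
  also have "\<dots> = (\<Sum>r\<in>orb_reps c e. \<Sum>(a, n, \<rho>) \<leftarrow> W.
           a * (if orb_rep c (cmp C \<sigma> r) = r then rep_char n \<rho> (orb_aut c (cmp C \<sigma> r)) else 0))"
    unfolding case_prod_beta sum_distrib_left by (rule sum_list_sum_swap)
  finally show ?thesis by (auto intro!: sum.cong simp: case_prod_unfold)
qed

lemma binomX_virtual:
  assumes s: "s \<in> Aut C c"
  shows "\<exists>V. virtual_free C V \<and> (\<forall>x\<in>set V. fst (snd x) = c) \<and>
     (\<forall>e \<sigma>. chi_virtual C V e \<sigma> = (if e \<in> Obj C \<and> \<sigma> \<in> Aut C e then of_nat (binomX C c (conj_cls c s) e \<sigma>) else 0))"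
proof -
  have c: "c \<in> Obj C" using Aut_Obj s by blast
  obtain W :: "(complex \<times> nat \<times> ('m \<Rightarrow> nat \<Rightarrow> nat \<Rightarrow> complex)) list" where
    W_rep: "\<forall>(a, n, \<rho>) \<in> set W. is_rep C c n \<rho>" and
    W_char: "\<forall>g\<in>Aut C c. (\<Sum>(a, n, \<rho>) \<leftarrow> W. a * rep_char n \<rho> g) = (if g \<in> conj_cls c s then 1 else 0)"
    using class_indicator_rep_chars[OF s] by blast
  define V where "V = map (\<lambda>(a, n, \<rho>). (a, c, n, \<rho>)) W"
  have "chi_virtual C V e \<sigma> = of_nat (binomX C c (conj_cls c s) e \<sigma>)" if e: "e \<in> Obj C" and \<sigma>: "\<sigma> \<in> Aut C e" for e \<sigma>
  proof -
    have "orb_aut c (cmp C \<sigma> r) \<in> Aut C c" if "r \<in> orb_reps c e" for r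
      using that orb_aut(1)[OF Aut_comp_Hom[OF \<sigma>]] unfolding orb_reps_def by auto
    then have "chi_virtual C V e \<sigma> = (\<Sum>r\<in>orb_reps c e.
        if orb_rep c (cmp C \<sigma> r) = r \<and> orb_aut c (cmp C \<sigma> r) \<in> conj_cls c s then 1 else 0)"
      unfolding V_def chi_virtual_at_one_object[OF W_rep c e \<sigma>] using W_char by (intro sum.cong) auto
    also have "\<dots> = of_nat (binomX C c (conj_cls c s) e \<sigma>)"
      using finite_orb_reps binomX_eq_card_orb_reps[OF s \<sigma>] by (simp add: sum.If_cases Int_def)
    finally show ?thesis .
  qed
  moreover have "chi_virtual C V e \<sigma> = 0" if "\<not> (e \<in> Obj C \<and> \<sigma> \<in> Aut C e)" for e \<sigma>
    unfolding chi_virtual_def using chi_free_out[OF that] by (induct V) auto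
  moreover have "virtual_free C V" unfolding V_def virtual_free_def using W_rep c by auto
  moreover have "\<forall>x\<in>set V. fst (snd x) = c" unfolding V_def by auto
  ultimately show ?thesis by metis
qed

definition binom_vm :: "'o \<Rightarrow> 'm set \<Rightarrow> ('o, 'm) virtmod" where
  "binom_vm c \<mu> = (SOME V. virtual_free C V \<and> (\<forall>x\<in>set V. fst (snd x) = c) \<and>
     (\<forall>e \<sigma>. chi_virtual C V e \<sigma> = (if e \<in> Obj C \<and> \<sigma> \<in> Aut C e then of_nat (binomX C c \<mu> e \<sigma>) else 0)))"

lemma binom_vm: assumes "conj_class C c \<mu>"
  shows "virtual_free C (binom_vm c \<mu>) \<and> (\<forall>x\<in>set (binom_vm c \<mu>). fst (snd x) = c) \<and>
     (\<forall>e \<sigma>. chi_virtual C (binom_vm c \<mu>) e \<sigma> = (if e \<in> Obj C \<and> \<sigma> \<in> Aut C e then of_nat (binomX C c \<mu> e \<sigma>) else 0))"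
proof -
  obtain s where s: "s \<in> Aut C c" "\<mu> = conj_cls c s" using assms unfolding conj_class_iff by blast
  show ?thesis unfolding binom_vm_def s(2) by (rule someI_ex[OF binomX_virtual[OF s(1)]])
qed

definition vm_of_cp :: "('o, 'm) charpoly \<Rightarrow> ('o, 'm) virtmod" where
  "vm_of_cp P = concat (map (\<lambda>(a, c, \<mu>). map (\<lambda>(b, c', n, \<rho>). (a * b, c', n, \<rho>)) (binom_vm c \<mu>)) P)"

context
  fixes P :: "('o, 'm) charpoly"
  assumes P: "char_poly C P"
begin

lemma binom_vm_of_char_poly:
  assumes "(a, c, \<mu>) \<in> set P"
  shows "virtual_free C (binom_vm c \<mu>) \<and> (\<forall>x\<in>set (binom_vm c \<mu>). fst (snd x) = c) \<and>
     (\<forall>e \<sigma>. chi_virtual C (binom_vm c \<mu>) e \<sigma> = (if e \<in> Obj C \<and> \<sigma> \<in> Aut C e then of_nat (binomX C c \<mu> e \<sigma>) else 0))"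
  using P assms unfolding char_poly_def by (intro binom_vm) auto

lemma virtual_free_vm_of_cp: "virtual_free C (vm_of_cp P)"
  unfolding virtual_free_def vm_of_cp_def
proof clarsimp
  fix a c \<mu> b c' n \<rho> assume m: "(a, c, \<mu>) \<in> set P" "(b, c', n, \<rho>) \<in> set (binom_vm c \<mu>)"
  then show "c' \<in> Obj C \<and> is_rep C c' n \<rho>"
    using binom_vm_of_char_poly[OF m(1)] unfolding virtual_free_def by fastforce
qed

lemma vf_deg_le_vm_of_cp:
  assumes "cp_deg_le C P d"
  shows "vf_deg_le C (vm_of_cp P) d"
  unfolding vf_deg_le_def vm_of_cp_def
proof clarsimp
  fix a c \<mu> b c' n \<rho> assume m: "(a, c, \<mu>) \<in> set P" "(b, c', n, \<rho>) \<in> set (binom_vm c \<mu>)"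
  then have "c' = c" using binom_vm_of_char_poly[OF m(1)] by fastforce
  then show "obj_le C c' d" using assms m(1) unfolding cp_deg_le_def by auto
qed

lemma chi_virtual_vm_of_cp: "chi_virtual C (vm_of_cp P) = cp_fun C P"
proof (intro ext)
  fix e \<sigma>
  have "chi_virtual C (vm_of_cp P) e \<sigma> = (\<Sum>x\<leftarrow>P. fst x * chi_virtual C (binom_vm (fst (snd x)) (snd (snd x))) e \<sigma>)"
    unfolding vm_of_cp_def chi_virtual_concat by (simp add: comp_def case_prod_beta chi_virtual_scale)
  also have "\<dots> = (\<Sum>x\<leftarrow>P. fst x * (if e \<in> Obj C \<and> \<sigma> \<in> Aut C e
      then of_nat (binomX C (fst (snd x)) (snd (snd x)) e \<sigma>) else 0))"
  proof (intro arg_cong[where f = sum_list] map_cong refl)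
    fix x assume "x \<in> set P"
    then have "(fst x, fst (snd x), snd (snd x)) \<in> set P" by simp
    then show "fst x * chi_virtual C (binom_vm (fst (snd x)) (snd (snd x))) e \<sigma> = fst x *
        (if e \<in> Obj C \<and> \<sigma> \<in> Aut C e then of_nat (binomX C (fst (snd x)) (snd (snd x)) e \<sigma>) else 0)"
      using binom_vm_of_char_poly by presburger
  qed
  also have "\<dots> = cp_fun C P e \<sigma>"
    unfolding cp_fun_def by (cases "e \<in> Obj C \<and> \<sigma> \<in> Aut C e") (auto simp: split_def)
  finally show "chi_virtual C (vm_of_cp P) e \<sigma> = cp_fun C P e \<sigma>" .
qed

end

definition cp_of_vm :: "('o, 'm) virtmod \<Rightarrow> ('o, 'm) charpoly" where
  "cp_of_vm V = concat (map (\<lambda>(a, c, n, \<rho>). map (\<lambda>(b, c', \<mu>). (a * b, c', \<mu>)) (ind_cp c n \<rho>)) V)"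

context
  fixes V :: "('o, 'm) virtmod"
  assumes V: "virtual_free C V"
begin

lemma summand_of_virtual_free: "(a, c, n, \<rho>) \<in> set V \<Longrightarrow> c \<in> Obj C \<and> is_rep C c n \<rho>"
  using V unfolding virtual_free_def by auto

lemma char_poly_cp_of_vm: "char_poly C (cp_of_vm V)"
  unfolding char_poly_def cp_of_vm_def
proof clarsimp
  fix a c n \<rho> b c' \<mu> assume m: "(a, c, n, \<rho>) \<in> set V" "(b, c', \<mu>) \<in> set (ind_cp c n \<rho>)"
  then show "c' \<in> Obj C \<and> conj_class C c' \<mu>"
    using char_poly_ind_cp[of c n \<rho>] summand_of_virtual_free[OF m(1)] unfolding char_poly_def by auto
qed

lemma cp_deg_le_cp_of_vm:
  assumes "vf_deg_le C V d"
  shows "cp_deg_le C (cp_of_vm V) d"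
  unfolding cp_deg_le_def cp_of_vm_def
proof clarsimp
  fix a c n \<rho> b c' \<mu> assume m: "(a, c, n, \<rho>) \<in> set V" "(b, c', \<mu>) \<in> set (ind_cp c n \<rho>)"
  then have "c' = c" unfolding ind_cp_def by auto
  then show "obj_le C c' d" using assms m(1) unfolding vf_deg_le_def by auto
qed

lemma cp_fun_cp_of_vm: "cp_fun C (cp_of_vm V) = chi_virtual C V"
proof (intro ext)
  fix e \<sigma>
  have "cp_fun C (cp_of_vm V) e \<sigma>
      = (\<Sum>x\<leftarrow>V. fst x * cp_fun C (ind_cp (fst (snd x)) (fst (snd (snd x))) (snd (snd (snd x)))) e \<sigma>)"
    unfolding cp_of_vm_def cp_fun_concat by (simp add: comp_def case_prod_beta cp_fun_scale)
  also have "\<dots> = (\<Sum>x\<leftarrow>V. fst x * chi_free C [(fst (snd x), fst (snd (snd x)), snd (snd (snd x)))] e \<sigma>)"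
  proof (intro arg_cong[where f = sum_list] map_cong refl)
    fix x assume "x \<in> set V"
    then have "fst (snd x) \<in> Obj C \<and> is_rep C (fst (snd x)) (fst (snd (snd x))) (snd (snd (snd x)))"
      using summand_of_virtual_free[of "fst x" "fst (snd x)" "fst (snd (snd x))" "snd (snd (snd x))"] by simp
    then have "free_module C [(fst (snd x), fst (snd (snd x)), snd (snd (snd x)))]"
      unfolding free_module_def by (simp add: case_prod_beta)
    then show "fst x * cp_fun C (ind_cp (fst (snd x)) (fst (snd (snd x))) (snd (snd (snd x)))) e \<sigma>
        = fst x * chi_free C [(fst (snd x), fst (snd (snd x)), snd (snd (snd x)))] e \<sigma>"
      by (simp add: chi_free_eq_cp_fun case_prod_beta)
  qed
  also have "\<dots> = chi_virtual C V e \<sigma>" unfolding chi_virtual_def by (simp add: split_def)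
  finally show "cp_fun C (cp_of_vm V) e \<sigma> = chi_virtual C V e \<sigma>" .
qed

end

end

theorem theoremA:
  fixes C :: "('o, 'm) cat"
  assumes "FI_type C"
  shows "(\<forall>L. free_module C L \<longrightarrow> (\<exists>P. char_poly C P \<and> chi_free C L = cp_fun C P))
       \<and> (\<forall>P. char_poly C P \<longrightarrow>
            (\<exists>V. virtual_free C V \<and> cp_fun C P = chi_virtual C V))
       \<and> (\<forall>d\<in>Obj C.
            {cp_fun C P | P. char_poly C P \<and> cp_deg_le C P d}
          = {chi_virtual C V | V. virtual_free C V \<and> vf_deg_le C V d})"
proof -
  interpret FI_category C using assms by unfold_locales
  have "{cp_fun C P | P. char_poly C P \<and> cp_deg_le C P d}
      = {chi_virtual C V | V. virtual_free C V \<and> vf_deg_le C V d}" for d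
  proof (intro equalityI subsetI)
    fix x assume "x \<in> {cp_fun C P | P. char_poly C P \<and> cp_deg_le C P d}"
    then obtain P where P: "char_poly C P" "cp_deg_le C P d" "x = cp_fun C P" by blast
    then have "x = chi_virtual C (vm_of_cp P) \<and> virtual_free C (vm_of_cp P) \<and> vf_deg_le C (vm_of_cp P) d"
      using virtual_free_vm_of_cp vf_deg_le_vm_of_cp chi_virtual_vm_of_cp by simp
    then show "x \<in> {chi_virtual C V | V. virtual_free C V \<and> vf_deg_le C V d}" by blast
  next
    fix x assume "x \<in> {chi_virtual C V | V. virtual_free C V \<and> vf_deg_le C V d}"
    then obtain V where V: "virtual_free C V" "vf_deg_le C V d" "x = chi_virtual C V" by blast
    then have "x = cp_fun C (cp_of_vm V) \<and> char_poly C (cp_of_vm V) \<and> cp_deg_le C (cp_of_vm V) d"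
      using char_poly_cp_of_vm cp_deg_le_cp_of_vm cp_fun_cp_of_vm by simp
    then show "x \<in> {cp_fun C P | P. char_poly C P \<and> cp_deg_le C P d}" by blast
  qed
  moreover have "\<exists>V. virtual_free C V \<and> cp_fun C P = chi_virtual C V" if "char_poly C P" for P
    using virtual_free_vm_of_cp[OF that] chi_virtual_vm_of_cp[OF that] by metis
  ultimately show ?thesis
    using chi_free_eq_cp_fun char_poly_free_cp by blast
qed

end
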